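(* Let $L$ be the star fork, the subfork, or the dot, and let $K,K'$ be proper pseudohexes such that $K$ is obtained from $K'$ by $L$-addition. Then $L_K$ can be safely reduced.
   Context: Pseudohex. A pseudohex is a bipartite graph $K$ (parallel edges allowed, no loops) whose edges are coloured blue, red and white, which is either empty or satisfies: (i) the blue edges form vertex-disjoint 6-cycles covering $V(K)$, called the hexagons of $K$; if a hexagon is the 6-cycle $v_0v_1\cdots v_5v_0$ we write $\bar{v_i}=v_{i+3}$ (indices mod 6); (ii) for each vertex $x$, $\{x,\bar x\}$ is a red edge of $K$ (further red edges may exist); (iii) the white edges form a perfect matching of $K$. A white edge $e=\{x,y\}$ is real if $\bar e=\{\bar x,\bar y\}$ is also a white edge and the only red edges sharing a vertex with $e$ or $\bar e$ are $\{x,\bar x\}$ and $\{y,\bar y\}$; non-real white edges are derived. An end is a red edge parallel to a white edge. $G^K$ is the graph whose vertices are the hexagons of $K$, two hexagons being adjacent iff some pair of real white edges $e,\bar e$ joins them. $K$ is proper if it has no end and $G^K$ is 2-connected with no cycle of length 2. Reduction. Let $h$ be a hexagon and $N$ one of the two perfect matchings of its blue 6-cycle. For each edge of $N$, let $P$ be the path formed by that edge and the two white edges adjacent to it. If $P$ is not a cycle of length 2, add a new white edge $e_P$ joining the end vertices of $P$, and for each red edge $\{u,w\}$ with $w$ an interior vertex of $P$ add a red edge $\{u,w'\}$ where $w'$ is the endpoint of $e_P$ in the same bipartition class as $w$. If $P$ is a cycle of length 2, then for each red edge $\{u,w\}$ with $w$ an interior vertex of $P$ add a red edge $\{u,\bar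 u\}$. Finally delete the vertices of $h$. Reducing hexagons $h_1,\dots,h_l$ by perfect matchings $N_1,\dots,N_l$ means performing these reductions successively; its contracted paths are the components (paths and cycles) of the subgraph of $K$ formed by $N_1\cup\dots\cup N_l$ together with all white edges having an endpoint in $V(h_1)\cup\dots\cup V(h_l)$. The reduction is safe if every contracted path/cycle contains at most one derived white edge of $K$; a set of hexagons can be safely reduced if some choice of perfect matchings gives a safe reduction. Fork-type graphs and addition. The star fork is $K_{1,3}$; the bold star fork has one half-edge at each of its three leaves. The subfork is a single edge (two vertices); the bold subfork has one half-edge at each of its two vertices. The dot is a single vertex; a bold dot has two or three half-edges attached to it. A graph is obtained from $G'$ by addition of the bold $L$ if it is obtained from the disjoint union of $G'$ and $L$ by joining each half-edge of the bold $L$ to a distinct vertex of degree 2 of $G'$. $K$ is obtained from $K'$ by $L$-addition if $G^K$ is obtained from $G^{K'}$ by addition of the bold $L$; $L_K$ is the set of hexagons of $K$ corresponding to the vertices of $L$. *)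

theory Defs
  imports Main
begin

datatype colour = Blue | Red | White

text \<open>A finite multigraph: vertex set, edge set (edges are abstract objects, so parallel
edges are allowed), endpoint map and colouring.\<close>
record ('v, 'e) cgraph =
  pverts :: "'v set"
  pedges :: "'e set"
  pends  :: "'e \<Rightarrow> 'v set"
  pcol   :: "'e \<Rightarrow> colour"

definition col_edges :: "('v, 'e) cgraph \<Rightarrow> colour \<Rightarrow> 'e set" where
  "col_edges K c = {e \<in> pedges K. pcol K e = c}"

definition wf_cgraph :: "('v, 'e) cgraph \<Rightarrow> bool" where
  "wf_cgraph K \<longleftrightarrow> finite (pverts K) \<and> finite (pedges K) \<and>
     (\<forall>e\<in>pedges K. pends K e \<subseteq> pverts K)"

text \<open>Bipartite (which also forces every edge to have two distinct ends: no loops).\<close>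
definition bipartite_cg :: "('v, 'e) cgraph \<Rightarrow> bool" where
  "bipartite_cg K \<longleftrightarrow> (\<exists>side :: 'v \<Rightarrow> bool.
     \<forall>e\<in>pedges K. \<exists>a b. pends K e = {a, b} \<and> side a \<noteq> side b)"

definition blue_cycle :: "('v, 'e) cgraph \<Rightarrow> 'v list \<Rightarrow> bool" where
  "blue_cycle K vs \<longleftrightarrow> length vs = 6 \<and> distinct vs \<and> set vs \<subseteq> pverts K \<and>
     (\<forall>i<6. \<exists>e\<in>col_edges K Blue. pends K e = {vs ! i, vs ! (Suc i mod 6)})"

definition blue_deg :: "('v, 'e) cgraph \<Rightarrow> 'v \<Rightarrow> nat" where
  "blue_deg K x = card {e \<in> col_edges K Blue. x \<in> pends K e}"

definition white_deg :: "('v, 'e) cgraph \<Rightarrow> 'v \<Rightarrow> nat" where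
  "white_deg K x = card {e \<in> col_edges K White. x \<in> pends K e}"

definition hexagons :: "('v, 'e) cgraph \<Rightarrow> 'v set set" where
  "hexagons K = {set vs | vs. blue_cycle K vs}"

definition bar :: "('v, 'e) cgraph \<Rightarrow> 'v \<Rightarrow> 'v" where
  "bar K x = (THE y. \<exists>vs i. blue_cycle K vs \<and> i < 6 \<and> vs ! i = x \<and> y = vs ! ((i + 3) mod 6))"

text \<open>Pseudohex: empty, or (i) blue edges form vertex-disjoint 6-cycles covering all
vertices (every vertex has blue degree 2 and lies on a blue 6-cycle), (ii) each
\<open>{x, bar x}\<close> is a red edge, (iii) white edges form a perfect matching.\<close>
definition pseudohex :: "('v, 'e) cgraph \<Rightarrow> bool" where
  "pseudohex K \<longleftrightarrow> wf_cgraph K \<and> bipartite_cg K \<and>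
     (pverts K = {} \<or>
      ((\<forall>x\<in>pverts K. blue_deg K x = 2 \<and> (\<exists>vs. blue_cycle K vs \<and> x \<in> set vs)) \<and>
       (\<forall>x\<in>pverts K. \<exists>r\<in>col_edges K Red. pends K r = {x, bar K x}) \<and>
       (\<forall>x\<in>pverts K. white_deg K x = 1)))"

definition real_edge :: "('v, 'e) cgraph \<Rightarrow> 'e \<Rightarrow> bool" where
  "real_edge K e \<longleftrightarrow> e \<in> col_edges K White \<and>
     (\<exists>x y. pends K e = {x, y} \<and>
        (\<exists>e'\<in>col_edges K White. pends K e' = {bar K x, bar K y}) \<and>
        (\<forall>r\<in>col_edges K Red. pends K r \<inter> {x, y, bar K x, bar K y} \<noteq> {} \<longrightarrow>
            pends K r = {x, bar K x} \<or> pends K r = {y, bar K y}))"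

definition derived_edge :: "('v, 'e) cgraph \<Rightarrow> 'e \<Rightarrow> bool" where
  "derived_edge K e \<longleftrightarrow> e \<in> col_edges K White \<and> \<not> real_edge K e"

definition has_end :: "('v, 'e) cgraph \<Rightarrow> bool" where
  "has_end K \<longleftrightarrow> (\<exists>r\<in>col_edges K Red. \<exists>w\<in>col_edges K White. pends K r = pends K w)"

definition joining :: "('v, 'e) cgraph \<Rightarrow> 'v set \<Rightarrow> 'v set \<Rightarrow> 'e set" where
  "joining K H1 H2 = {e. real_edge K e \<and> pends K e \<inter> H1 \<noteq> {} \<and> pends K e \<inter> H2 \<noteq> {}}"

definition gadj :: "('v, 'e) cgraph \<Rightarrow> 'v set \<Rightarrow> 'v set \<Rightarrow> bool" where
  "gadj K H1 H2 \<longleftrightarrow> H1 \<in> hexagons K \<and> H2 \<in> hexagons K \<and> H1 \<noteq> H2 \<and> joining K H1 H2 \<noteq> {}"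

definition gdeg :: "('v, 'e) cgraph \<Rightarrow> 'v set \<Rightarrow> nat" where
  "gdeg K H = card {H'. gadj K H H'}"

text \<open>\<open>G^K\<close> has no cycle of length 2: two distinct hexagons are joined by at most one
pair \<open>e, bar e\<close> of real white edges, i.e. by at most two real white edges.\<close>
definition no_2cycle :: "('v, 'e) cgraph \<Rightarrow> bool" where
  "no_2cycle K \<longleftrightarrow> (\<forall>H1\<in>hexagons K. \<forall>H2\<in>hexagons K. H1 \<noteq> H2 \<longrightarrow> card (joining K H1 H2) \<le> 2)"

definition connected_on :: "'a set \<Rightarrow> ('a \<Rightarrow> 'a \<Rightarrow> bool) \<Rightarrow> bool" where
  "connected_on W A \<longleftrightarrow> (\<forall>u\<in>W. \<forall>v\<in>W. (u, v) \<in> {(a, b). a \<in> W \<and> b \<in> W \<and> A a b}\<^sup>*)"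

definition two_connected :: "'a set \<Rightarrow> ('a \<Rightarrow> 'a \<Rightarrow> bool) \<Rightarrow> bool" where
  "two_connected W A \<longleftrightarrow> finite W \<and> card W \<ge> 3 \<and> connected_on W A \<and>
     (\<forall>x\<in>W. connected_on (W - {x}) A)"

definition proper :: "('v, 'e) cgraph \<Rightarrow> bool" where
  "proper K \<longleftrightarrow> pseudohex K \<and> \<not> has_end K \<and> two_connected (hexagons K) (gadj K) \<and> no_2cycle K"

datatype forktype = StarFork | Subfork | Dot

definition out_nbrs :: "('v, 'e) cgraph \<Rightarrow> 'v set set \<Rightarrow> 'v set \<Rightarrow> 'v set set" where
  "out_nbrs K S s = {t \<in> hexagons K - S. gadj K s t}"

text \<open>\<open>G^K[S]\<close> is the fork \<open>L\<close>, and each vertex of \<open>S\<close> has as many edges to the rest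
as the bold \<open>L\<close> has half-edges at that vertex.\<close>
definition bold_shape :: "forktype \<Rightarrow> ('v, 'e) cgraph \<Rightarrow> 'v set set \<Rightarrow> bool" where
  "bold_shape L K S = (case L of
     StarFork \<Rightarrow> (\<exists>c a1 a2 a3. S = {c, a1, a2, a3} \<and> distinct [c, a1, a2, a3] \<and>
        (\<forall>u\<in>S. \<forall>v\<in>S. gadj K u v \<longleftrightarrow>
            (u = c \<and> v \<in> {a1, a2, a3}) \<or> (v = c \<and> u \<in> {a1, a2, a3})) \<and>
        card (out_nbrs K S c) = 0 \<and> card (out_nbrs K S a1) = 1 \<and>
        card (out_nbrs K S a2) = 1 \<and> card (out_nbrs K S a3) = 1)
   | Subfork \<Rightarrow> (\<exists>a b. S = {a, b} \<and> a \<noteq> b \<and> gadj K a b \<and>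
        card (out_nbrs K S a) = 1 \<and> card (out_nbrs K S b) = 1)
   | Dot \<Rightarrow> (\<exists>a. S = {a} \<and> card (out_nbrs K S a) \<in> {2, 3}))"

text \<open>\<open>K\<close> is obtained from \<open>K'\<close> by \<open>L\<close>-addition, with \<open>L_K = S\<close>: \<open>G^K - S\<close> is isomorphic
(via \<open>\<phi>\<close>) to \<open>G^{K'}\<close>, \<open>G^K[S]\<close> together with the edges leaving \<open>S\<close> is the bold \<open>L\<close>, and the
half-edges are joined to pairwise distinct vertices of degree 2 of \<open>G^{K'}\<close>.\<close>
definition L_addition ::
  "forktype \<Rightarrow> ('w, 'f) cgraph \<Rightarrow> ('v, 'e) cgraph \<Rightarrow> 'v set set \<Rightarrow> bool" where
  "L_addition L K' K S \<longleftrightarrow> S \<subseteq> hexagons K \<and>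
     (\<exists>\<phi>. bij_betw \<phi> (hexagons K') (hexagons K - S) \<and>
        (\<forall>a\<in>hexagons K'. \<forall>b\<in>hexagons K'. gadj K' a b \<longleftrightarrow> gadj K (\<phi> a) (\<phi> b)) \<and>
        bold_shape L K S \<and>
        (\<forall>s1\<in>S. \<forall>s2\<in>S. s1 \<noteq> s2 \<longrightarrow> out_nbrs K S s1 \<inter> out_nbrs K S s2 = {}) \<and>
        (\<forall>s\<in>S. \<forall>t\<in>out_nbrs K S s. \<exists>u\<in>hexagons K'. \<phi> u = t \<and> gdeg K' u = 2))"

definition hex_pm :: "('v, 'e) cgraph \<Rightarrow> 'v set \<Rightarrow> 'e set \<Rightarrow> bool" where
  "hex_pm K h M \<longleftrightarrow> M \<subseteq> col_edges K Blue \<and> (\<forall>e\<in>M. pends K e \<subseteq> h) \<and>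
     (\<forall>x\<in>h. \<exists>!e. e \<in> M \<and> x \<in> pends K e)"

text \<open>Two edges of the edge set \<open>F\<close> lie in the same component of the subgraph formed by
\<open>F\<close> iff they are related by the reflexive-transitive closure of "share an endpoint".\<close>
definition edge_adj :: "('v, 'e) cgraph \<Rightarrow> 'e set \<Rightarrow> ('e \<times> 'e) set" where
  "edge_adj K F = {(e, f). e \<in> F \<and> f \<in> F \<and> pends K e \<inter> pends K f \<noteq> {}}"

definition contracted_edges :: "('v, 'e) cgraph \<Rightarrow> 'v set set \<Rightarrow> ('v set \<Rightarrow> 'e set) \<Rightarrow> 'e set" where
  "contracted_edges K S N =
     (\<Union>h\<in>S. N h) \<union> {w \<in> col_edges K White. pends K w \<inter> \<Union>S \<noteq> {}}"

text \<open>The set of hexagons \<open>S\<close> can be safely reduced: for some choice of perfect matchings,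
every contracted path/cycle contains at most one derived white edge of \<open>K\<close>.\<close>
definition safely_reducible :: "('v, 'e) cgraph \<Rightarrow> 'v set set \<Rightarrow> bool" where
  "safely_reducible K S \<longleftrightarrow> (\<exists>N. (\<forall>h\<in>S. hex_pm K h (N h)) \<and>
     (\<forall>d1\<in>contracted_edges K S N. \<forall>d2\<in>contracted_edges K S N.
        derived_edge K d1 \<and> derived_edge K d2 \<and>
        (d1, d2) \<in> (edge_adj K (contracted_edges K S N))\<^sup>* \<longrightarrow> d1 = d2))"

end

theory Submission
  imports Defs
begin

text \<open>A reduction is safe as soon as the vertices of the reduced hexagons can be labelled so that
labels agree along the chosen matching edges and along real white edges, while vertices carrying
derived white edges get pairwise distinct labels. In all three shapes one hexagon \<open>c\<close> of \<open>L_K\<close>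
(the centre of the star, one end of the subfork, the dot) is reduced by a fixed matching, and each
other hexagon \<open>s\<close> of \<open>L_K\<close> is joined to \<open>c\<close> by a pair \<open>e, bar e\<close> of real edges and to the rest of
\<open>G^K\<close> by another one. Since \<open>K\<close> has no ends and \<open>G^K\<close> no 2-cycles, these pairs are the only real
edges inside \<open>L_K\<close>, and the derived edges of \<open>s\<close> sit on its third antipodal pair. Label a vertex
by the matching edge of \<open>c\<close> through which its contracted path enters \<open>c\<close>. Switching the matching
of \<open>s\<close> moves that entry to the antipode; this separates the entries of the three leaves of the
star and keeps the entry of the subfork away from the derived edges of \<open>c\<close>.\<close>

section \<open>Positions on a hexagon\<close>

text \<open>The vertices of a hexagon are numbered \<open>0, \<dots>, 5\<close> along its blue cycle, so the antipode
of position \<open>k\<close> is \<open>(k + 3) mod 6\<close> and the three antipodal pairs are the classes of \<open>k mod 3\<close>.\<close>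

lemma less6_cases: "(i::nat) < 6 \<Longrightarrow> i = 0 \<or> i = 1 \<or> i = 2 \<or> i = 3 \<or> i = 4 \<or> i = 5"
  by auto

lemma mod3_eq_iff_antipodal:
  "(i::nat) < 6 \<Longrightarrow> j < 6 \<Longrightarrow> i mod 3 = j mod 3 \<longleftrightarrow> j = i \<or> j = (i + 3) mod 6"
  by (drule less6_cases, drule less6_cases, elim disjE, simp_all)

lemma antipode_antipode: "(k::nat) < 6 \<Longrightarrow> ((k + 3) mod 6 + 3) mod 6 = k"
  by (drule less6_cases; elim disjE; simp)

lemma antipode_neq: "(k::nat) < 6 \<Longrightarrow> (k + 3) mod 6 \<noteq> k"
  by (drule less6_cases; elim disjE; simp)

lemma antipode_mod3: "((p::nat) + 3) mod 6 mod 3 = p mod 3"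
  by (simp add: mod_mod_cancel)

lemma antipode_even_neq: "(k::nat) < 6 \<Longrightarrow> even ((k + 3) mod 6) \<noteq> even k"
  by (drule less6_cases; elim disjE; simp)

lemma antipode_div2_neq: "(k::nat) < 6 \<Longrightarrow> (k + 3) mod 6 div 2 \<noteq> k div 2"
  by (drule less6_cases; elim disjE; simp)

lemma mod6_neighbours:
  "(i::nat) < 6 \<Longrightarrow> Suc ((i + 5) mod 6) mod 6 = i \<and> (Suc i mod 6 + 5) mod 6 = i
     \<and> Suc i mod 6 \<noteq> (i + 5) mod 6 \<and> Suc i mod 6 \<noteq> i \<and> (i + 5) mod 6 \<noteq> i"
  by (drule less6_cases, elim disjE, simp_all)

lemma mod6_walk:
  "(i::nat) < 6 \<Longrightarrow>
   Suc (Suc i mod 6) mod 6 = (i + 2) mod 6 \<and> (Suc i mod 6 + 5) mod 6 = i \<and>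
   Suc ((i + 2) mod 6) mod 6 = (i + 3) mod 6 \<and> ((i + 2) mod 6 + 5) mod 6 = Suc i mod 6 \<and>
   Suc ((i + 5) mod 6) mod 6 = i \<and> ((i + 5) mod 6 + 5) mod 6 = (i + 4) mod 6 \<and>
   Suc ((i + 4) mod 6) mod 6 = (i + 5) mod 6 \<and> ((i + 4) mod 6 + 5) mod 6 = (i + 3) mod 6 \<and>
   (i + 2) mod 6 \<noteq> i \<and> (i + 4) mod 6 \<noteq> i \<and> (i + 3) mod 6 \<noteq> Suc i mod 6 \<and> (i + 3) mod 6 \<noteq> (i + 5) mod 6"
  by (drule less6_cases, elim disjE, simp_all)

lemma even_div2_neq: "(i::nat) < 6 \<Longrightarrow> j < 6 \<Longrightarrow> even i \<Longrightarrow> even j \<Longrightarrow> i \<noteq> j \<Longrightarrow> i div 2 \<noteq> j div 2"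
  by (drule less6_cases, drule less6_cases, elim disjE, simp_all)

lemma mod3_third_unique:
  assumes "(p1::nat) mod 3 \<noteq> p2 mod 3" "i mod 3 \<noteq> p1 mod 3" "i mod 3 \<noteq> p2 mod 3"
    "j mod 3 \<noteq> p1 mod 3" "j mod 3 \<noteq> p2 mod 3"
  shows "i mod 3 = j mod 3"
proof -
  have "p1 mod 3 < 3" "p2 mod 3 < 3" "i mod 3 < 3" "j mod 3 < 3" by auto
  with assms show ?thesis by linarith
qed

lemma mod3_third_ex:
  assumes "(p1::nat) mod 3 \<noteq> p2 mod 3"
  obtains q where "q < 6" "q mod 3 \<noteq> p1 mod 3" "q mod 3 \<noteq> p2 mod 3"
proof -
  have "p1 mod 3 < 3" "p2 mod 3 < 3" by auto
  then consider "p1 mod 3 \<noteq> 0" "p2 mod 3 \<noteq> 0" | "p1 mod 3 \<noteq> 1" "p2 mod 3 \<noteq> 1"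
    | "p1 mod 3 \<noteq> 2" "p2 mod 3 \<noteq> 2"
    using assms by linarith
  then show ?thesis
    using that[of 0] that[of 1] that[of 2] by fastforce
qed

lemma mod3_cover:
  assumes "(a::nat) mod 3 \<noteq> b mod 3" "a mod 3 \<noteq> d mod 3" "b mod 3 \<noteq> d mod 3"
  shows "u mod 3 = a mod 3 \<or> u mod 3 = b mod 3 \<or> u mod 3 = d mod 3"
proof -
  have "\<And>A B D U :: nat. A < 3 \<Longrightarrow> B < 3 \<Longrightarrow> D < 3 \<Longrightarrow> U < 3 \<Longrightarrow> A \<noteq> B \<Longrightarrow> A \<noteq> D \<Longrightarrow> B \<noteq> D
      \<Longrightarrow> U = A \<or> U = B \<or> U = D"
    by (auto simp: less_Suc_eq numeral_eq_Suc)
  then show ?thesis using assms by simp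
qed

text \<open>The two perfect matchings of a hexagon: \<open>mate True\<close> pairs \<open>2i\<close> with \<open>2i + 1\<close>,
\<open>mate False\<close> pairs \<open>2i + 1\<close> with \<open>2i + 2\<close>.\<close>

definition mate :: "bool \<Rightarrow> nat \<Rightarrow> nat" where
  "mate b k = (if even k = b then Suc k mod 6 else (k + 5) mod 6)"

lemma mate_less6: "mate b k < 6"
  unfolding mate_def by simp

lemma mate_mate: "k < 6 \<Longrightarrow> mate b (mate b k) = k"
  unfolding mate_def by (cases b; drule less6_cases; elim disjE; simp)

lemma mate_mod3_neq: "k < 6 \<Longrightarrow> mate b k mod 3 \<noteq> k mod 3"
  unfolding mate_def by (cases b; drule less6_cases; elim disjE; simp)

lemma mate_even: "even k = b \<Longrightarrow> mate b k = Suc k mod 6"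
  unfolding mate_def by simp

lemma mate_odd: "k < 6 \<Longrightarrow> even k \<noteq> b \<Longrightarrow> even ((k + 5) mod 6) = b \<and> Suc ((k + 5) mod 6) mod 6 = k"
  by (cases b; drule less6_cases; elim disjE; simp)

lemma mate_True_div2: "d < 6 \<Longrightarrow> i < 6 \<Longrightarrow> d \<noteq> i \<Longrightarrow> d div 2 = i div 2 \<Longrightarrow> mate True i = d"
  unfolding mate_def by (drule less6_cases; drule less6_cases; elim disjE; simp)

lemma mate_True_div2_eq: "k < 6 \<Longrightarrow> even k \<Longrightarrow> mate True k div 2 = k div 2"
  unfolding mate_def by (drule less6_cases; elim disjE; simp)

lemma mate_antipode_mod3:
  "p < 6 \<Longrightarrow> i < 6 \<Longrightarrow> p mod 3 \<noteq> i mod 3 \<Longrightarrow> mate b i mod 3 \<noteq> p mod 3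
   \<Longrightarrow> mate b ((i + 3) mod 6) mod 3 = p mod 3"
  unfolding mate_def by (cases b; drule less6_cases; drule less6_cases; elim disjE; simp)

definition mate_towards :: "bool \<Rightarrow> nat \<Rightarrow> nat \<Rightarrow> nat" where
  "mate_towards b p q = (if mate b p mod 3 = q mod 3 then p else (p + 3) mod 6)"

lemma mate_towards_cases: "mate_towards b p q = p \<or> mate_towards b p q = (p + 3) mod 6"
  unfolding mate_towards_def by simp

lemma mate_towards_unique:
  "p < 6 \<Longrightarrow> q < 6 \<Longrightarrow> p mod 3 \<noteq> q mod 3 \<Longrightarrow> j < 6 \<Longrightarrow> j mod 3 = p mod 3
   \<Longrightarrow> mate b j mod 3 = q mod 3 \<Longrightarrow> j = mate_towards b p q"
  unfolding mate_towards_def mate_def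
  by (cases b; drule less6_cases; drule less6_cases; drule less6_cases; elim disjE; simp)

lemma mate_towards_True_False:
  "p < 6 \<Longrightarrow> q < 6 \<Longrightarrow> p mod 3 \<noteq> q mod 3 \<Longrightarrow> mate_towards True p q \<noteq> mate_towards False p q"
  unfolding mate_towards_def mate_def
  by (drule less6_cases; drule less6_cases; elim disjE; simp)

lemma div2_eq_mate_towards_True:
  assumes p: "p < 6" "q < 6" "p mod 3 \<noteq> q mod 3" and i: "i < 6" "i mod 3 = p mod 3"
    and d: "d < 6" "d mod 3 = q mod 3" and eq: "d div 2 = i div 2"
  shows "i = mate_towards True p q"
proof -
  have "d \<noteq> i" using p(3) i(2) d(2) by auto
  then have "mate True i = d" using mate_True_div2[OF d(1) i(1) _ eq] by blast
  then show ?thesis using mate_towards_unique[OF p i(1,2)] d(2) by simp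
qed

section \<open>Pseudohexes without ends\<close>

locale pseudohex_no_ends =
  fixes K :: "('v, 'e) cgraph"
  assumes pseudohex: "pseudohex K" and no_ends: "\<not> has_end K"
begin

lemma wf: "wf_cgraph K" and bipartite: "bipartite_cg K"
  using pseudohex unfolding pseudohex_def by auto

lemma
  assumes "x \<in> pverts K"
  shows blue_deg_2: "blue_deg K x = 2"
    and in_blue_cycle: "\<exists>vs. blue_cycle K vs \<and> x \<in> set vs"
    and red_bar: "\<exists>r\<in>col_edges K Red. pends K r = {x, bar K x}"
    and white_deg_1: "white_deg K x = 1"
  using pseudohex assms unfolding pseudohex_def by auto

lemma col_edges_subset: "col_edges K c \<subseteq> pedges K" unfolding col_edges_def by auto

lemma ends_doubleton: "e \<in> pedges K \<Longrightarrow> \<exists>a b. pends K e = {a,b} \<and> a \<noteq> b"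
  using bipartite unfolding bipartite_cg_def by blast

lemma ends_subset_verts: "e \<in> pedges K \<Longrightarrow> pends K e \<subseteq> pverts K"
  using wf unfolding wf_cgraph_def by blast

lemma finite_edges: "finite (pedges K)"
  using wf unfolding wf_cgraph_def by blast

lemma ex1_white_edge: "x \<in> pverts K \<Longrightarrow> \<exists>!e. e \<in> col_edges K White \<and> x \<in> pends K e"
proof -
  assume x: "x \<in> pverts K"
  have "card {e \<in> col_edges K White. x \<in> pends K e} = 1"
    using white_deg_1[OF x] unfolding white_deg_def .
  then obtain e where "{e \<in> col_edges K White. x \<in> pends K e} = {e}" by (rule card_1_singletonE)
  then show ?thesis by (metis (mono_tags, lifting) mem_Collect_eq singletonD singletonI)
qed

definition white_at :: "'v \<Rightarrow> 'e" where
  "white_at x = (THE e. e \<in> col_edges K White \<and> x \<in> pends K e)"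

lemma white_at_in: "x \<in> pverts K \<Longrightarrow> white_at x \<in> col_edges K White \<and> x \<in> pends K (white_at x)"
  unfolding white_at_def using theI'[OF ex1_white_edge] by blast

lemma white_at_unique: "x \<in> pverts K \<Longrightarrow> e \<in> col_edges K White \<Longrightarrow> x \<in> pends K e \<Longrightarrow> e = white_at x"
  using ex1_white_edge white_at_in by blast

definition wmate :: "'v \<Rightarrow> 'v" where
  "wmate x = (THE y. y \<in> pends K (white_at x) \<and> y \<noteq> x)"

lemma white_at_ends: "x \<in> pverts K \<Longrightarrow> pends K (white_at x) = {x, wmate x} \<and> wmate x \<noteq> x"
proof -
  assume x: "x \<in> pverts K"
  have w: "white_at x \<in> pedges K" "x \<in> pends K (white_at x)"
    using white_at_in[OF x] col_edges_subset by auto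
  obtain a b where ab: "pends K (white_at x) = {a,b}" "a \<noteq> b" using ends_doubleton[OF w(1)] by blast
  have ex: "\<exists>!y. y \<in> pends K (white_at x) \<and> y \<noteq> x" using ab w(2) by auto
  have "wmate x \<in> pends K (white_at x) \<and> wmate x \<noteq> x" unfolding wmate_def using theI'[OF ex] .
  then show ?thesis using ab w(2) by auto
qed

lemma wmate_in_verts: "x \<in> pverts K \<Longrightarrow> wmate x \<in> pverts K"
  using white_at_ends ends_subset_verts white_at_in col_edges_subset by blast

lemma white_at_wmate: "x \<in> pverts K \<Longrightarrow> white_at (wmate x) = white_at x"
  by (metis white_at_unique white_at_in insertCI wmate_in_verts white_at_ends)

lemma wmate_wmate: "x \<in> pverts K \<Longrightarrow> wmate (wmate x) = x"
  by (metis white_at_wmate doubleton_eq_iff wmate_in_verts white_at_ends)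

lemma white_at_eq_cases: "x \<in> pverts K \<Longrightarrow> y \<in> pverts K \<Longrightarrow> white_at x = white_at y \<Longrightarrow> y = x \<or> y = wmate x"
  by (metis white_at_in insert_iff white_at_ends singletonD)

lemma white_edge_ends:
  "e \<in> col_edges K White \<Longrightarrow> u \<in> pends K e \<Longrightarrow>
    u \<in> pverts K \<and> e = white_at u \<and> pends K e = {u, wmate u}"
  by (metis white_at_unique col_edges_subset ends_subset_verts white_at_ends subsetD)

lemma blue_edge_at_cycle_vertex:
  assumes vs: "blue_cycle K vs" and i: "i < 6" and e: "e \<in> col_edges K Blue" and x: "vs ! i \<in> pends K e"
  shows "pends K e = {vs ! i, vs ! (Suc i mod 6)} \<or> pends K e = {vs ! ((i+5) mod 6), vs ! i}"
proof -
  have L: "length vs = 6" "distinct vs" "set vs \<subseteq> pverts K"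
    using vs unfolding blue_cycle_def by auto
  obtain e1 where e1: "e1 \<in> col_edges K Blue" "pends K e1 = {vs ! i, vs ! (Suc i mod 6)}"
    using vs i unfolding blue_cycle_def by blast
  have i5: "(i+5) mod 6 < 6" by simp
  obtain e2 where e2: "e2 \<in> col_edges K Blue" "pends K e2 = {vs ! ((i+5) mod 6), vs ! i}"
    using vs i5 mod6_neighbours[OF i] unfolding blue_cycle_def by metis
  have ne: "vs ! (Suc i mod 6) \<noteq> vs ! ((i+5) mod 6)" "vs ! (Suc i mod 6) \<noteq> vs ! i"
    using mod6_neighbours[OF i] L i by (simp_all add: nth_eq_iff_index_eq)
  have e12: "e1 \<noteq> e2" using e1 e2 ne by (metis doubleton_eq_iff)
  have xv: "vs ! i \<in> pverts K" using L i by auto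
  let ?A = "{e \<in> col_edges K Blue. vs ! i \<in> pends K e}"
  have c2: "card ?A = 2" using blue_deg_2[OF xv] unfolding blue_deg_def .
  have fin: "finite ?A" using c2 by (metis card.infinite zero_neq_numeral)
  have "e \<in> {e1, e2}"
  proof (rule ccontr)
    assume "e \<notin> {e1,e2}"
    then have "{e,e1,e2} \<subseteq> ?A" using e e1 e2 x by auto
    then have "card {e,e1,e2} \<le> 2" using card_mono[OF fin] c2 by metis
    moreover have "card {e,e1,e2} = 3" using \<open>e \<notin> {e1,e2}\<close> e12 by simp
    ultimately show False by simp
  qed
  then show ?thesis using e1 e2 by auto
qed

lemma blue_cycle_step:
  assumes vs: "blue_cycle K vs" and ws: "blue_cycle K ws" and t: "t < 6" and a: "a < 6"
    and eq: "ws ! t = vs ! a"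
  shows "ws ! (Suc t mod 6) = vs ! (Suc a mod 6) \<or> ws ! (Suc t mod 6) = vs ! ((a+5) mod 6)"
proof -
  obtain e where e: "e \<in> col_edges K Blue" "pends K e = {ws ! t, ws ! (Suc t mod 6)}"
    using ws t unfolding blue_cycle_def by blast
  have ne: "ws ! (Suc t mod 6) \<noteq> ws ! t"
    using ws t mod6_neighbours[OF t] unfolding blue_cycle_def by (simp add: nth_eq_iff_index_eq)
  from blue_edge_at_cycle_vertex[OF vs a e(1)] e eq ne show ?thesis by (auto simp: doubleton_eq_iff)
qed

lemma blue_cycleD: "blue_cycle K vs \<Longrightarrow> length vs = 6 \<and> distinct vs \<and> set vs \<subseteq> pverts K"
  unfolding blue_cycle_def by auto

lemma blue_cycle_set_subset:
  assumes vs: "blue_cycle K vs" and ws: "blue_cycle K ws" and j: "j < 6" and a: "a < 6"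
    and eq: "ws ! j = vs ! a"
  shows "set ws \<subseteq> set vs"
proof -
  have L: "length vs = 6" "length ws = 6" using vs ws blue_cycleD by auto
  have k: "ws ! ((j + k) mod 6) \<in> set vs" for k
  proof (induction k)
    case 0 then show ?case using j eq L a by simp
  next
    case (Suc k)
    then obtain b where b: "b < 6" "ws ! ((j+k) mod 6) = vs ! b" using L by (metis in_set_conv_nth)
    have "ws ! (Suc ((j+k) mod 6) mod 6) \<in> set vs"
      using blue_cycle_step[OF vs ws _ b] b L by (metis mod_less_divisor nth_mem zero_less_numeral)
    then show ?case by (simp add: mod_Suc_eq)
  qed
  show ?thesis
  proof
    fix x assume "x \<in> set ws"
    then obtain t where t: "t < 6" "ws ! t = x" using L by (metis in_set_conv_nth)
    have "(j + (t + 6 - j)) mod 6 = t" using t j by simp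
    then show "x \<in> set vs" using k[of "t + 6 - j"] t by simp
  qed
qed

lemma blue_cycle_antipode:
  assumes vs: "blue_cycle K vs" and ws: "blue_cycle K ws" and j: "j < 6" and i: "i < 6"
    and eq: "ws ! j = vs ! i"
  shows "ws ! ((j+3) mod 6) = vs ! ((i+3) mod 6)"
proof -
  have L: "length vs = 6" "length ws = 6" "distinct vs" "distinct ws"
    using vs ws blue_cycleD by auto
  have dw: "\<And>a b. a < 6 \<Longrightarrow> b < 6 \<Longrightarrow> ws ! a = ws ! b \<longleftrightarrow> a = b"
    using L by (simp add: nth_eq_iff_index_eq)
  have dv: "\<And>a b. a < 6 \<Longrightarrow> b < 6 \<Longrightarrow> vs ! a = vs ! b \<longleftrightarrow> a = b"
    using L by (simp add: nth_eq_iff_index_eq)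
  note Ij = mod6_walk[OF j] and Ii = mod6_walk[OF i]
  have s1: "ws ! (Suc j mod 6) = vs ! (Suc i mod 6) \<or> ws ! (Suc j mod 6) = vs ! ((i+5) mod 6)"
    using blue_cycle_step[OF vs ws j i eq] .
  then show ?thesis
  proof
    assume a1: "ws ! (Suc j mod 6) = vs ! (Suc i mod 6)"
    have s2: "ws ! ((j+2) mod 6) = vs ! ((i+2) mod 6) \<or> ws ! ((j+2) mod 6) = vs ! i"
      using blue_cycle_step[OF vs ws _ _ a1] Ij Ii by simp
    have n2: "ws ! ((j+2) mod 6) \<noteq> vs ! i"
      using eq dw Ij j by (metis mod_less_divisor zero_less_numeral)
    have a2: "ws ! ((j+2) mod 6) = vs ! ((i+2) mod 6)" using s2 n2 by blast
    have s3: "ws ! ((j+3) mod 6) = vs ! ((i+3) mod 6) \<or> ws ! ((j+3) mod 6) = vs ! (Suc i mod 6)"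
      using blue_cycle_step[OF vs ws _ _ a2] Ij Ii by simp
    have n3: "ws ! ((j+3) mod 6) \<noteq> vs ! (Suc i mod 6)"
      using a1 dw Ij j by (metis mod_less_divisor zero_less_numeral)
    show ?thesis using s3 n3 by blast
  next
    assume a1: "ws ! (Suc j mod 6) = vs ! ((i+5) mod 6)"
    have s2: "ws ! ((j+2) mod 6) = vs ! i \<or> ws ! ((j+2) mod 6) = vs ! ((i+4) mod 6)"
      using blue_cycle_step[OF vs ws _ _ a1] Ij Ii by simp
    have n2: "ws ! ((j+2) mod 6) \<noteq> vs ! i"
      using eq dw Ij j by (metis mod_less_divisor zero_less_numeral)
    have a2: "ws ! ((j+2) mod 6) = vs ! ((i+4) mod 6)" using s2 n2 by blast
    have s3: "ws ! ((j+3) mod 6) = vs ! ((i+5) mod 6) \<or> ws ! ((j+3) mod 6) = vs ! ((i+3) mod 6)"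
      using blue_cycle_step[OF vs ws _ _ a2] Ij Ii by simp
    have n3: "ws ! ((j+3) mod 6) \<noteq> vs ! ((i+5) mod 6)"
      using a1 dw Ij j by (metis mod_less_divisor zero_less_numeral)
    show ?thesis using s3 n3 by blast
  qed
qed

lemma bar_blue_cycle: assumes vs: "blue_cycle K vs" and i: "i < 6"
  shows "bar K (vs ! i) = vs ! ((i+3) mod 6)"
  unfolding bar_def
proof (rule the_equality)
  show "\<exists>ws j. blue_cycle K ws \<and> j < 6 \<and> ws ! j = vs ! i \<and> vs ! ((i + 3) mod 6) = ws ! ((j + 3) mod 6)"
    using vs i by blast
next
  fix y assume "\<exists>ws j. blue_cycle K ws \<and> j < 6 \<and> ws ! j = vs ! i \<and> y = ws ! ((j + 3) mod 6)"
  then obtain ws j where "blue_cycle K ws" "j < 6" "ws ! j = vs ! i" "y = ws ! ((j + 3) mod 6)" by blast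
  then show "y = vs ! ((i + 3) mod 6)" using blue_cycle_antipode[OF vs _ _ i] by blast
qed

lemma hexagons_iff: "H \<in> hexagons K \<longleftrightarrow> (\<exists>vs. blue_cycle K vs \<and> H = set vs)"
  unfolding hexagons_def by blast

lemma blue_cycle_set_eq:
  assumes vs: "blue_cycle K vs" and ws: "blue_cycle K ws" and x: "x \<in> set vs" "x \<in> set ws"
  shows "set vs = set ws"
proof -
  have L: "length vs = 6" "length ws = 6" using vs ws blue_cycleD by auto
  obtain i where i: "i < 6" "vs ! i = x" using x L by (metis in_set_conv_nth)
  obtain j where j: "j < 6" "ws ! j = x" using x L by (metis in_set_conv_nth)
  show ?thesis
    using blue_cycle_set_subset[OF vs ws j(1) i(1)] blue_cycle_set_subset[OF ws vs i(1) j(1)] i j by auto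
qed

lemma hexagons_disjoint: "H1 \<in> hexagons K \<Longrightarrow> H2 \<in> hexagons K \<Longrightarrow> x \<in> H1 \<Longrightarrow> x \<in> H2 \<Longrightarrow> H1 = H2"
  unfolding hexagons_iff using blue_cycle_set_eq by blast

lemma hexagon_subset_verts: "H \<in> hexagons K \<Longrightarrow> H \<subseteq> pverts K"
  unfolding hexagons_iff using blue_cycleD by blast

lemma vert_in_hexagon: "x \<in> pverts K \<Longrightarrow> \<exists>H\<in>hexagons K. x \<in> H"
proof -
  assume "x \<in> pverts K"
  then obtain vs where "blue_cycle K vs" "x \<in> set vs" using in_blue_cycle by blast
  then have "set vs \<in> hexagons K" unfolding hexagons_def by blast
  then show ?thesis using \<open>x \<in> set vs\<close> by (rule bexI[rotated])
qed

definition hex_cycle :: "'v set \<Rightarrow> 'v list" where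
  "hex_cycle H = (SOME vs. blue_cycle K vs \<and> set vs = H)"

lemma hex_cycle_spec: "H \<in> hexagons K \<Longrightarrow> blue_cycle K (hex_cycle H) \<and> set (hex_cycle H) = H"
proof -
  assume "H \<in> hexagons K"
  then obtain vs where "blue_cycle K vs \<and> set vs = H" unfolding hexagons_iff by blast
  then show ?thesis unfolding hex_cycle_def by (rule someI)
qed

definition hex_pos :: "'v set \<Rightarrow> 'v \<Rightarrow> nat" where
  "hex_pos H v = (THE i. i < 6 \<and> hex_cycle H ! i = v)"

lemma hex_pos_spec: assumes H: "H \<in> hexagons K" and v: "v \<in> H"
  shows "hex_pos H v < 6 \<and> hex_cycle H ! hex_pos H v = v"
proof -
  have c: "blue_cycle K (hex_cycle H)" "set (hex_cycle H) = H" using hex_cycle_spec[OF H] by auto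
  have L: "length (hex_cycle H) = 6" "distinct (hex_cycle H)" using c blue_cycleD by auto
  obtain i where i: "i < 6" "hex_cycle H ! i = v" using v c L by (metis in_set_conv_nth)
  have "\<exists>!i. i < 6 \<and> hex_cycle H ! i = v"
  proof (rule ex1I[of _ i])
    show "i < 6 \<and> hex_cycle H ! i = v" using i by simp
    fix j assume "j < 6 \<and> hex_cycle H ! j = v"
    then show "j = i" using i L nth_eq_iff_index_eq[of "hex_cycle H" j i] by auto
  qed
  then show ?thesis unfolding hex_pos_def by (rule theI')
qed

lemma hex_pos_nth: assumes H: "H \<in> hexagons K" and i: "i < 6"
  shows "hex_pos H (hex_cycle H ! i) = i"
proof -
  have c: "blue_cycle K (hex_cycle H)" "set (hex_cycle H) = H" using hex_cycle_spec[OF H] by auto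
  have L: "length (hex_cycle H) = 6" "distinct (hex_cycle H)" using c blue_cycleD by auto
  have "hex_cycle H ! i \<in> H" using c(2) L(1) i nth_mem[of i "hex_cycle H"] by simp
  then have "hex_pos H (hex_cycle H ! i) < 6" "hex_cycle H ! hex_pos H (hex_cycle H ! i) = hex_cycle H ! i"
    using hex_pos_spec[OF H] by auto
  then show ?thesis using L i by (simp add: nth_eq_iff_index_eq)
qed

lemma hex_cycle_nth_in: "H \<in> hexagons K \<Longrightarrow> i < 6 \<Longrightarrow> hex_cycle H ! i \<in> H"
  using hex_cycle_spec blue_cycleD by (metis nth_mem)

lemma hex_pos_inj: "H \<in> hexagons K \<Longrightarrow> v \<in> H \<Longrightarrow> w \<in> H \<Longrightarrow> hex_pos H v = hex_pos H w \<Longrightarrow> v = w"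
proof -
  assume a: "H \<in> hexagons K" "v \<in> H" "w \<in> H" "hex_pos H v = hex_pos H w"
  have "hex_cycle H ! hex_pos H v = v" "hex_cycle H ! hex_pos H w = w"
    using hex_pos_spec[OF a(1)] a(2,3) by auto
  then show ?thesis using a(4) by metis
qed

lemma bar_hex_pos: assumes H: "H \<in> hexagons K" and v: "v \<in> H"
  shows "bar K v \<in> H \<and> hex_pos H (bar K v) = (hex_pos H v + 3) mod 6 \<and>
    bar K v = hex_cycle H ! ((hex_pos H v + 3) mod 6)"
proof -
  have p: "hex_pos H v < 6" "hex_cycle H ! hex_pos H v = v" using hex_pos_spec[OF H v] by auto
  have b: "bar K v = hex_cycle H ! ((hex_pos H v + 3) mod 6)"
    using bar_blue_cycle[OF conjunct1[OF hex_cycle_spec[OF H]] p(1)] p(2) by simp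
  show ?thesis using b hex_cycle_nth_in[OF H] hex_pos_nth[OF H] by simp
qed

lemma bar_bar: assumes H: "H \<in> hexagons K" and v: "v \<in> H" shows "bar K (bar K v) = v"
proof -
  have p: "hex_pos H v < 6" "hex_cycle H ! hex_pos H v = v" using hex_pos_spec[OF H v] by auto
  have b1: "bar K v \<in> H" "hex_pos H (bar K v) = (hex_pos H v + 3) mod 6"
    using bar_hex_pos[OF H v] by auto
  have "bar K (bar K v) = hex_cycle H ! ((hex_pos H (bar K v) + 3) mod 6)"
    using bar_hex_pos[OF H b1(1)] by blast
  then have "bar K (bar K v) = hex_cycle H ! (((hex_pos H v + 3) mod 6 + 3) mod 6)"
    using b1 by simp
  then show ?thesis using antipode_antipode[OF p(1)] p(2) by simp
qed

lemma bar_ne: assumes H: "H \<in> hexagons K" and v: "v \<in> H" shows "bar K v \<noteq> v"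
proof -
  have p: "hex_pos H v < 6" using hex_pos_spec[OF H v] by auto
  have "(hex_pos H v + 3) mod 6 \<noteq> hex_pos H v" using antipode_neq[OF p] .
  moreover have "hex_pos H (bar K v) = (hex_pos H v + 3) mod 6" using bar_hex_pos[OF H v] by blast
  ultimately show ?thesis by auto
qed

lemma hex_pos_mod3_eq_iff: assumes H: "H \<in> hexagons K" and v: "v \<in> H" and w: "w \<in> H"
  shows "(hex_pos H v mod 3 = hex_pos H w mod 3) = (w = v \<or> w = bar K v)"
proof -
  have p: "hex_pos H v < 6" "hex_pos H w < 6"
    using hex_pos_spec[OF H v] hex_pos_spec[OF H w] by auto
  have "(hex_pos H v mod 3 = hex_pos H w mod 3) =
      (hex_pos H w = hex_pos H v \<or> hex_pos H w = (hex_pos H v + 3) mod 6)"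
    using mod3_eq_iff_antipodal[OF p] .
  also have "\<dots> = (w = v \<or> w = bar K v)"
  proof -
    have b: "bar K v \<in> H" "hex_pos H (bar K v) = (hex_pos H v + 3) mod 6"
      using bar_hex_pos[OF H v] by auto
    show ?thesis using hex_pos_inj[OF H w v] hex_pos_inj[OF H w b(1)] b(2) by auto
  qed
  finally show ?thesis .
qed

definition hex_of :: "'v \<Rightarrow> 'v set" where
  "hex_of v = (THE H. H \<in> hexagons K \<and> v \<in> H)"

lemma hex_of_eq: "H \<in> hexagons K \<Longrightarrow> v \<in> H \<Longrightarrow> hex_of v = H"
  unfolding hex_of_def by (rule the_equality) (use hexagons_disjoint in blast)+

lemma bar_in_verts:
  "v \<in> pverts K \<Longrightarrow>
    bar K v \<in> pverts K \<and> bar K (bar K v) = v \<and> bar K v \<noteq> v \<and> hex_of (bar K v) = hex_of v"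
proof -
  assume "v \<in> pverts K"
  then obtain H where H: "H \<in> hexagons K" "v \<in> H" using vert_in_hexagon by blast
  have b: "bar K v \<in> H" using bar_hex_pos[OF H] by blast
  show ?thesis using b H hexagon_subset_verts[OF H(1)] bar_bar[OF H] bar_ne[OF H] hex_of_eq[OF H(1)] by auto
qed

lemma wmate_neq_bar: assumes v: "v \<in> pverts K" shows "wmate v \<noteq> bar K v"
proof
  assume a: "wmate v = bar K v"
  obtain r where r: "r \<in> col_edges K Red" "pends K r = {v, bar K v}" using red_bar[OF v] by blast
  have "pends K (white_at v) = {v, bar K v}" using white_at_ends[OF v] a by simp
  then have "has_end K" unfolding has_end_def using r white_at_in[OF v] by metis
  then show False using no_ends by simp
qed

lemma bar_inj: "a \<in> pverts K \<Longrightarrow> b \<in> pverts K \<Longrightarrow> bar K a = bar K b \<Longrightarrow> a = b"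
  using bar_in_verts by metis

lemma real_white_at_bar:
  assumes x: "x \<in> pverts K" and re: "real_edge K (white_at x)"
  shows "wmate (bar K x) = bar K (wmate x) \<and> real_edge K (white_at (bar K x))"
proof -
  obtain a b e' where ab: "pends K (white_at x) = {a,b}"
    and e': "e' \<in> col_edges K White" "pends K e' = {bar K a, bar K b}"
    and rc: "\<forall>r\<in>col_edges K Red. pends K r \<inter> {a, b, bar K a, bar K b} \<noteq> {} \<longrightarrow>
            pends K r = {a, bar K a} \<or> pends K r = {b, bar K b}"
    using re unfolding real_edge_def by blast
  have ox: "wmate x \<in> pverts K" using wmate_in_verts[OF x] .
  have xo: "pends K (white_at x) = {x, wmate x}" "wmate x \<noteq> x" using white_at_ends[OF x] by auto
  have abx: "{a,b} = {x, wmate x}" using ab xo by simp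
  have pe: "pends K e' = {bar K x, bar K (wmate x)}" using e' abx by (auto simp: doubleton_eq_iff)
  have bx: "bar K x \<in> pverts K" using bar_in_verts[OF x] by blast
  have e'W: "e' = white_at (bar K x)" using white_at_unique[OF bx e'(1)] pe by simp
  have bne: "bar K x \<noteq> bar K (wmate x)" using bar_inj[OF x ox] xo(2) by metis
  have obx: "wmate (bar K x) = bar K (wmate x)"
    using white_at_ends[OF bx] e'W pe bne by (metis doubleton_eq_iff)
  have bb: "bar K (bar K x) = x" "bar K (bar K (wmate x)) = wmate x" using bar_in_verts x ox by auto
  have "real_edge K (white_at (bar K x))"
    unfolding real_edge_def
  proof (intro conjI exI)
    show "white_at (bar K x) \<in> col_edges K White" using white_at_in[OF bx] by blast
    show "pends K (white_at (bar K x)) = {bar K x, bar K (wmate x)}" using pe e'W by simp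
    show "\<exists>e'\<in>col_edges K White. pends K e' = {bar K (bar K x), bar K (bar K (wmate x))}"
      using white_at_in[OF x] xo bb by auto
    show "\<forall>r\<in>col_edges K Red.
            pends K r \<inter> {bar K x, bar K (wmate x), bar K (bar K x), bar K (bar K (wmate x))} \<noteq> {} \<longrightarrow>
            pends K r = {bar K x, bar K (bar K x)} \<or> pends K r = {bar K (wmate x), bar K (bar K (wmate x))}"
    proof (intro ballI impI)
      fix r assume r: "r \<in> col_edges K Red"
        "pends K r \<inter> {bar K x, bar K (wmate x), bar K (bar K x), bar K (bar K (wmate x))} \<noteq> {}"
      have s: "{bar K x, bar K (wmate x), bar K (bar K x), bar K (bar K (wmate x))} =
          {a, b, bar K a, bar K b}"
        using bb abx by (auto simp: doubleton_eq_iff)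
      have "pends K r = {a, bar K a} \<or> pends K r = {b, bar K b}" using rc r s by auto
      then show "pends K r = {bar K x, bar K (bar K x)} \<or>
          pends K r = {bar K (wmate x), bar K (bar K (wmate x))}"
        using abx bb by (auto simp: doubleton_eq_iff)
    qed
  qed
  then show ?thesis using obx by simp
qed

lemma white_at_bar_neq: assumes x: "x \<in> pverts K" and re: "real_edge K (white_at x)"
  shows "white_at (bar K x) \<noteq> white_at x"
proof
  assume a: "white_at (bar K x) = white_at x"
  have bx: "bar K x \<in> pverts K" "bar K x \<noteq> x" using bar_in_verts[OF x] by auto
  have "bar K x = x \<or> bar K x = wmate x" using white_at_eq_cases[OF x bx(1) a[symmetric]] .
  then show False using bx(2) wmate_neq_bar[OF x] by auto
qed

lemma real_edge_white: "real_edge K e \<Longrightarrow> e \<in> col_edges K White"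
  unfolding real_edge_def by blast

lemma gadj_sym: "gadj K H1 H2 \<Longrightarrow> gadj K H2 H1"
  unfolding gadj_def joining_def by blast

lemma joining_iff:
  assumes H1: "H1 \<in> hexagons K" and H2: "H2 \<in> hexagons K" and ne: "H1 \<noteq> H2"
  shows "e \<in> joining K H1 H2 \<longleftrightarrow> (\<exists>x\<in>H1. e = white_at x \<and> wmate x \<in> H2 \<and> real_edge K e)"
proof
  assume "e \<in> joining K H1 H2"
  then have e: "real_edge K e" "pends K e \<inter> H1 \<noteq> {}" "pends K e \<inter> H2 \<noteq> {}"
    unfolding joining_def by auto
  obtain x where x: "x \<in> pends K e" "x \<in> H1" using e(2) by blast
  obtain y where y: "y \<in> pends K e" "y \<in> H2" using e(3) by blast
  have w: "x \<in> pverts K" "e = white_at x" "pends K e = {x, wmate x}"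
    using white_edge_ends[OF real_edge_white[OF e(1)] x(1)] by auto
  have "y \<noteq> x" using hexagons_disjoint[OF H1 H2] x y ne by blast
  then have "y = wmate x" using w y by auto
  then show "\<exists>x\<in>H1. e = white_at x \<and> wmate x \<in> H2 \<and> real_edge K e" using x w y e by blast
next
  assume "\<exists>x\<in>H1. e = white_at x \<and> wmate x \<in> H2 \<and> real_edge K e"
  then obtain x where x: "x \<in> H1" "e = white_at x" "wmate x \<in> H2" "real_edge K e" by blast
  have xv: "x \<in> pverts K" using hexagon_subset_verts[OF H1] x by blast
  show "e \<in> joining K H1 H2" unfolding joining_def using x white_at_ends[OF xv] by auto
qed

lemma gadj_real_edge: assumes "gadj K H1 H2" shows "\<exists>x\<in>H1. real_edge K (white_at x) \<and> wmate x \<in> H2"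
proof -
  have g: "H1 \<in> hexagons K" "H2 \<in> hexagons K" "H1 \<noteq> H2" "joining K H1 H2 \<noteq> {}"
    using assms unfolding gadj_def by auto
  then obtain e where "e \<in> joining K H1 H2" by blast
  then obtain x where "x \<in> H1" "e = white_at x" "wmate x \<in> H2" "real_edge K e"
    using joining_iff[OF g(1-3)] by blast
  then show ?thesis by blast
qed

lemma bar_notin_hexagon: assumes H: "H \<in> hexagons K" and w: "w \<in> pverts K" "w \<notin> H"
  shows "bar K w \<notin> H"
proof
  assume b: "bar K w \<in> H"
  obtain H' where H': "H' \<in> hexagons K" "w \<in> H'" using vert_in_hexagon[OF w(1)] by blast
  have "bar K w \<in> H'" using bar_hex_pos[OF H'] by blast
  then have "H = H'" using hexagons_disjoint[OF H H'(1) b] by blast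
  then show False using H' w by simp
qed

lemma joining_bar: assumes H1: "H1 \<in> hexagons K" and H2: "H2 \<in> hexagons K"
  and x: "x \<in> H1" "wmate x \<in> H2" "real_edge K (white_at x)"
  shows "bar K x \<in> H1 \<and> wmate (bar K x) \<in> H2 \<and> real_edge K (white_at (bar K x))"
proof -
  have xv: "x \<in> pverts K" using hexagon_subset_verts[OF H1] x by blast
  have b1: "bar K x \<in> H1" using bar_hex_pos[OF H1 x(1)] by blast
  have b2: "bar K (wmate x) \<in> H2" using bar_hex_pos[OF H2 x(2)] by blast
  show ?thesis using real_white_at_bar[OF xv x(3)] b1 b2 by simp
qed

lemma joining_antipodal:
  assumes no_2cycle: "no_2cycle K"
    and H1: "H1 \<in> hexagons K" and H2: "H2 \<in> hexagons K" and ne: "H1 \<noteq> H2"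
    and x: "x \<in> H1" "wmate x \<in> H2" "real_edge K (white_at x)"
    and y: "y \<in> H1" "wmate y \<in> H2" "real_edge K (white_at y)"
  shows "y = x \<or> y = bar K x"
proof (rule ccontr)
  assume n: "\<not> (y = x \<or> y = bar K x)"
  have xv: "x \<in> pverts K" and yv: "y \<in> pverts K" using hexagon_subset_verts[OF H1] x y by auto
  have bx: "bar K x \<in> H1" "wmate (bar K x) \<in> H2" "real_edge K (white_at (bar K x))"
    using joining_bar[OF H1 H2 x] by auto
  have bxv: "bar K x \<in> pverts K" using bar_in_verts[OF xv] by blast
  have j: "white_at x \<in> joining K H1 H2" "white_at (bar K x) \<in> joining K H1 H2" "white_at y \<in> joining K H1 H2"
    using joining_iff[OF H1 H2 ne] x y bx by blast+
  have d1: "white_at x \<noteq> white_at (bar K x)" using white_at_bar_neq[OF xv x(3)] by simp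
  have dj: "\<And>a. a \<in> H1 \<Longrightarrow> wmate a \<in> H2 \<Longrightarrow> y \<noteq> wmate a"
    using hexagons_disjoint[OF H1 H2] y(1) ne by blast
  have d2: "white_at y \<noteq> white_at x" using white_at_eq_cases[OF xv yv] n dj[OF x(1,2)] by metis
  have d3: "white_at y \<noteq> white_at (bar K x)"
    using white_at_eq_cases[OF bxv yv] n dj[OF bx(1,2)] by metis
  have fin: "finite (joining K H1 H2)"
    by (rule finite_subset[OF _ finite_edges])
      (auto simp: joining_def dest!: real_edge_white intro: subsetD[OF col_edges_subset])
  have "card {white_at x, white_at (bar K x), white_at y} \<le> card (joining K H1 H2)"
    using j by (intro card_mono[OF fin]) auto
  moreover have "card {white_at x, white_at (bar K x), white_at y} = 3" using d1 d2 d3 by simp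
  ultimately show False using no_2cycle H1 H2 ne unfolding no_2cycle_def by fastforce
qed

lemma real_white_at_antipodal: assumes H: "H \<in> hexagons K" and y: "y \<in> H" "real_edge K (white_at y)"
  and u: "u \<in> H" "hex_pos H u mod 3 = hex_pos H y mod 3" shows "real_edge K (white_at u)"
proof -
  have yv: "y \<in> pverts K" using hexagon_subset_verts[OF H] y by blast
  have "u = y \<or> u = bar K y" using hex_pos_mod3_eq_iff[OF H y(1) u(1)] u(2) by simp
  then show ?thesis using real_white_at_bar[OF yv y(2)] y by auto
qed

lemma wmate_notin_antipodal:
  assumes H: "H \<in> hexagons K" and y: "y \<in> H" "real_edge K (white_at y)" "wmate y \<notin> H"
  and u: "u \<in> H" "hex_pos H u mod 3 = hex_pos H y mod 3" shows "wmate u \<notin> H"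
proof -
  have yv: "y \<in> pverts K" using hexagon_subset_verts[OF H] y by blast
  have oy: "wmate y \<in> pverts K" using wmate_in_verts[OF yv] .
  have "u = y \<or> u = bar K y" using hex_pos_mod3_eq_iff[OF H y(1) u(1)] u(2) by simp
  then show ?thesis using real_white_at_bar[OF yv y(2)] y bar_notin_hexagon[OF H oy y(3)] by auto
qed

text \<open>Two real exits in different antipodal classes leave only the third class for an internal white
edge, which would then join antipodes and so be parallel to a red edge: an end.\<close>

lemma no_internal_white_edge:
  assumes H: "H \<in> hexagons K" and y1: "y1 \<in> H" "real_edge K (white_at y1)" "wmate y1 \<notin> H"
    and y2: "y2 \<in> H" "real_edge K (white_at y2)" "wmate y2 \<notin> H"
    and d: "hex_pos H y1 mod 3 \<noteq> hex_pos H y2 mod 3"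
    and u: "u \<in> H" "wmate u \<in> H"
  shows False
proof -
  have uv: "u \<in> pverts K" using hexagon_subset_verts[OF H] u by blast
  have c1: "hex_pos H u mod 3 \<noteq> hex_pos H y1 mod 3" "hex_pos H u mod 3 \<noteq> hex_pos H y2 mod 3"
    using wmate_notin_antipodal[OF H y1 u(1)] wmate_notin_antipodal[OF H y2 u(1)] u(2) by auto
  have oo: "wmate (wmate u) = u" using wmate_wmate[OF uv] .
  have c2: "hex_pos H (wmate u) mod 3 \<noteq> hex_pos H y1 mod 3" "hex_pos H (wmate u) mod 3 \<noteq> hex_pos H y2 mod 3"
    using wmate_notin_antipodal[OF H y1 u(2)] wmate_notin_antipodal[OF H y2 u(2)] oo u(1) by auto
  have "hex_pos H u mod 3 = hex_pos H (wmate u) mod 3" using mod3_third_unique[OF d] c1 c2 by blast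
  then have "wmate u = u \<or> wmate u = bar K u" using hex_pos_mod3_eq_iff[OF H u(1) u(2)] by simp
  then show False using white_at_ends[OF uv] wmate_neq_bar[OF uv] by auto
qed

lemma real_edge_ends:
  assumes "real_edge K e" "u \<in> pends K e" "v \<in> pends K e" "u \<noteq> v"
  shows "u \<in> pverts K \<and> e = white_at u \<and> v = wmate u"
  using white_edge_ends[OF real_edge_white assms(2)] assms by auto

lemma real_exits_mod3_neq:
  assumes H: "H \<in> hexagons K" and t1: "t1 \<in> hexagons K" and t2: "t2 \<in> hexagons K" and t12: "t1 \<noteq> t2"
    and x1: "x1 \<in> H" "real_edge K (white_at x1)" "wmate x1 \<in> t1"
    and x2: "x2 \<in> H" "real_edge K (white_at x2)" "wmate x2 \<in> t2"
  shows "hex_pos H x1 mod 3 \<noteq> hex_pos H x2 mod 3"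
proof
  assume "hex_pos H x1 mod 3 = hex_pos H x2 mod 3"
  then have "x2 = x1 \<or> x2 = bar K x1" using hex_pos_mod3_eq_iff[OF H x1(1) x2(1)] by simp
  then have "wmate x2 \<in> t1" using joining_bar[OF H t1 x1(1,3,2)] x1 by auto
  then show False using hexagons_disjoint[OF t1 t2 _ x2(3)] t12 by blast
qed

lemma derived_third_class:
  assumes H: "H \<in> hexagons K"
    and y1: "y1 \<in> H" "real_edge K (white_at y1)" and y2: "y2 \<in> H" "real_edge K (white_at y2)"
    and d: "hex_pos H y1 mod 3 \<noteq> hex_pos H y2 mod 3"
    and q: "q mod 3 \<noteq> hex_pos H y1 mod 3" "q mod 3 \<noteq> hex_pos H y2 mod 3"
    and u: "u \<in> H" "derived_edge K (white_at u)"
  shows "hex_pos H u mod 3 = q mod 3"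
proof -
  have "\<not> real_edge K (white_at u)" using u(2) unfolding derived_edge_def by blast
  then have "hex_pos H u mod 3 \<noteq> hex_pos H y1 mod 3" "hex_pos H u mod 3 \<noteq> hex_pos H y2 mod 3"
    using real_white_at_antipodal[OF H y1 u(1)] real_white_at_antipodal[OF H y2 u(1)] by auto
  then show ?thesis using mod3_third_unique[OF d] q by blast
qed

definition blue_edge_at :: "'v list \<Rightarrow> nat \<Rightarrow> 'e" where
  "blue_edge_at vs k = (SOME e. e \<in> col_edges K Blue \<and> pends K e = {vs ! k, vs ! (Suc k mod 6)})"

lemma blue_edge_at_spec:
  "blue_cycle K vs \<Longrightarrow> k < 6 \<Longrightarrow>
    blue_edge_at vs k \<in> col_edges K Blue \<and> pends K (blue_edge_at vs k) = {vs ! k, vs ! (Suc k mod 6)}"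
  unfolding blue_edge_at_def blue_cycle_def by (rule someI_ex) blast

definition alt_matching :: "bool \<Rightarrow> 'v list \<Rightarrow> 'e set" where
  "alt_matching b vs = {blue_edge_at vs k | k. k < 6 \<and> even k = b}"

lemma alt_matching_edge:
  "blue_cycle K vs \<Longrightarrow> e \<in> alt_matching b vs \<Longrightarrow>
    \<exists>k<6. even k = b \<and> e = blue_edge_at vs k \<and> pends K e = {vs ! k, vs ! (mate b k)}"
proof -
  assume vs: "blue_cycle K vs" and "e \<in> alt_matching b vs"
  then obtain k where k: "k < 6" "even k = b" "e = blue_edge_at vs k"
    unfolding alt_matching_def by blast
  have "pends K e = {vs ! k, vs ! (Suc k mod 6)}" using blue_edge_at_spec[OF vs k(1)] k(3) by simp
  then show ?thesis using k mate_even[OF k(2)] by auto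
qed

lemma hex_pm_alt_matching: assumes vs: "blue_cycle K vs"
  shows "hex_pm K (set vs) (alt_matching b vs)"
proof -
  have L: "length vs = 6" "distinct vs" using blue_cycleD[OF vs] by auto
  have sub: "alt_matching b vs \<subseteq> col_edges K Blue"
    using blue_edge_at_spec[OF vs] unfolding alt_matching_def by blast
  have ends: "\<forall>e\<in>alt_matching b vs. pends K e \<subseteq> set vs"
    using blue_edge_at_spec[OF vs] L unfolding alt_matching_def by auto
  have ex1: "\<exists>!e. e \<in> alt_matching b vs \<and> x \<in> pends K e" if x: "x \<in> set vs" for x
  proof -
    obtain i where i: "i < 6" "vs ! i = x" using x L by (metis in_set_conv_nth)
    define e0 where "e0 = (if even i = b then blue_edge_at vs i else blue_edge_at vs ((i+5) mod 6))"
    have e0: "e0 \<in> alt_matching b vs \<and> x \<in> pends K e0"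
    proof (cases "even i = b")
      case True
      then show ?thesis unfolding e0_def alt_matching_def using blue_edge_at_spec[OF vs i(1)] i by auto
    next
      case False
      have m: "even ((i+5) mod 6) = b" "Suc ((i+5) mod 6) mod 6 = i"
        using mate_odd[OF i(1) False] by auto
      have "(i+5) mod 6 < 6" by simp
      then show ?thesis
        unfolding e0_def alt_matching_def using blue_edge_at_spec[OF vs, of "(i+5) mod 6"] m False i by auto
    qed
    show ?thesis
    proof (rule ex1I[of _ e0])
      show "e0 \<in> alt_matching b vs \<and> x \<in> pends K e0" using e0 .
      fix e assume e: "e \<in> alt_matching b vs \<and> x \<in> pends K e"
      then obtain k where k: "k < 6" "even k = b" "e = blue_edge_at vs k"
        unfolding alt_matching_def by blast
      have pk: "pends K e = {vs ! k, vs ! (Suc k mod 6)}"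
        using blue_edge_at_spec[OF vs k(1)] k by simp
      have "vs ! i = vs ! k \<or> vs ! i = vs ! (Suc k mod 6)" using e pk i by auto
      moreover have "Suc k mod 6 < 6" by simp
      ultimately have "i = k \<or> i = Suc k mod 6" using L i k nth_eq_iff_index_eq[of vs i] by metis
      then show "e = e0"
      proof
        assume "i = k" then show ?thesis unfolding e0_def using k by simp
      next
        assume ik: "i = Suc k mod 6"
        have "even i \<noteq> b \<and> k = (i+5) mod 6"
          using k ik by (drule_tac less6_cases, cases b, elim disjE, simp_all, elim disjE, simp_all)
        then show ?thesis unfolding e0_def using k by simp
      qed
    qed
  qed
  show ?thesis unfolding hex_pm_def using sub ends ex1 by blast
qed

end

text \<open>A labelling of the vertices of \<open>\<Union>S\<close> that is constant along matching edges and real white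
edges and injective on vertices with a derived white edge proves safety: the set of derived edges
at vertices carrying the label of an endpoint of a contracted edge is then constant along each
contracted path or cycle, and it is the singleton of any derived edge on it.\<close>

locale safe_labelling = pseudohex_no_ends K for K :: "('v, 'e) cgraph" +
  fixes S :: "'v set set" and N :: "'v set \<Rightarrow> 'e set" and cls :: "'v \<Rightarrow> 'c"
  assumes matchings: "\<And>h. h \<in> S \<Longrightarrow> hex_pm K h (N h)"
    and cls_matching_edge: "\<And>h e u v. h \<in> S \<Longrightarrow> e \<in> N h \<Longrightarrow> u \<in> pends K e \<Longrightarrow> v \<in> pends K e \<Longrightarrow>
      cls u = cls v"
    and cls_real_edge: "\<And>e u v. real_edge K e \<Longrightarrow> u \<in> pends K e \<Longrightarrow> v \<in> pends K e \<Longrightarrow>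
      u \<in> \<Union>S \<Longrightarrow> v \<in> \<Union>S \<Longrightarrow> cls u = cls v"
    and cls_derived_inj: "\<And>u v. u \<in> \<Union>S \<Longrightarrow> v \<in> \<Union>S \<Longrightarrow>
      derived_edge K (white_at u) \<Longrightarrow> derived_edge K (white_at v) \<Longrightarrow> cls u = cls v \<Longrightarrow> u = v"
begin

lemma matching_edge_in:
  assumes "h \<in> S" "e \<in> N h"
  shows "e \<in> col_edges K Blue" "pends K e \<subseteq> h"
  using matchings assms unfolding hex_pm_def by blast+

lemma contracted_edge_meets_reduced:
  assumes e: "e \<in> contracted_edges K S N"
  obtains u where "u \<in> pends K e" "u \<in> \<Union>S"
proof (cases "\<exists>h\<in>S. e \<in> N h")
  case True
  then obtain h where h: "h \<in> S" "e \<in> N h" by blast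
  obtain a b where "pends K e = {a, b}"
    using ends_doubleton matching_edge_in(1)[OF h] col_edges_subset by blast
  then show ?thesis using that matching_edge_in(2)[OF h] h(1) by blast
next
  case False
  then show ?thesis using e that unfolding contracted_edges_def by blast
qed

lemma contracted_edge_at_outer_vertex:
  assumes e: "e \<in> contracted_edges K S N" and z: "z \<in> pends K e" "z \<notin> \<Union>S"
  shows "e = white_at z"
proof -
  have "e \<notin> N h" if "h \<in> S" for h
    using matching_edge_in(2)[OF that] z that by blast
  then have "e \<in> col_edges K White" using e unfolding contracted_edges_def by blast
  then show ?thesis using white_edge_ends[OF _ z(1)] by blast
qed

definition derived_class :: "'v \<Rightarrow> 'e set" where
  "derived_class v = white_at ` {d \<in> \<Union>S. derived_edge K (white_at d) \<and> cls d = cls v}"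

lemma derived_class_derived:
  assumes "u \<in> \<Union>S" "derived_edge K (white_at u)"
  shows "derived_class u = {white_at u}"
proof -
  have "{d \<in> \<Union>S. derived_edge K (white_at d) \<and> cls d = cls u} = {u}"
    using cls_derived_inj assms by blast
  then show ?thesis unfolding derived_class_def by simp
qed

lemma derived_class_contracted_edge:
  assumes e: "e \<in> contracted_edges K S N"
    and u: "u \<in> pends K e" "u \<in> \<Union>S" and v: "v \<in> pends K e" "v \<in> \<Union>S"
  shows "derived_class u = derived_class v"
proof (cases "\<exists>h\<in>S. e \<in> N h")
  case True
  then obtain h where h: "h \<in> S" "e \<in> N h" by blast
  show ?thesis unfolding derived_class_def using cls_matching_edge[OF h u(1) v(1)] by simp
next
  case False
  then have w: "e \<in> col_edges K White" using e unfolding contracted_edges_def by blast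
  show ?thesis
  proof (cases "real_edge K e")
    case True
    then show ?thesis unfolding derived_class_def using cls_real_edge[OF True u(1) v(1) u(2) v(2)] by simp
  next
    case False
    then have "derived_edge K e" using w unfolding derived_edge_def by simp
    moreover have "e = white_at u" "e = white_at v"
      using white_edge_ends[OF w u(1)] white_edge_ends[OF w v(1)] by auto
    ultimately show ?thesis using derived_class_derived[OF u(2)] derived_class_derived[OF v(2)] by simp
  qed
qed

definition edge_class :: "'e \<Rightarrow> 'e set" where
  "edge_class e = derived_class (SOME u. u \<in> pends K e \<inter> \<Union>S)"

lemma edge_class_eq:
  assumes e: "e \<in> contracted_edges K S N" and u: "u \<in> pends K e" "u \<in> \<Union>S"
  shows "edge_class e = derived_class u"
proof -
  have "(SOME u. u \<in> pends K e \<inter> \<Union>S) \<in> pends K e \<inter> \<Union>S"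
    using contracted_edge_meets_reduced[OF e] by (metis IntI someI_ex)
  then show ?thesis unfolding edge_class_def using derived_class_contracted_edge[OF e _ _ u] by blast
qed

lemma edge_class_adj:
  assumes "(e, f) \<in> edge_adj K (contracted_edges K S N)"
  shows "edge_class e = edge_class f"
proof -
  have ef: "e \<in> contracted_edges K S N" "f \<in> contracted_edges K S N" and "pends K e \<inter> pends K f \<noteq> {}"
    using assms unfolding edge_adj_def by auto
  then obtain z where z: "z \<in> pends K e" "z \<in> pends K f" by blast
  show ?thesis
  proof (cases "z \<in> \<Union>S")
    case True
    then show ?thesis using edge_class_eq[OF ef(1) z(1)] edge_class_eq[OF ef(2) z(2)] by simp
  next
    case False
    then show ?thesis
      using contracted_edge_at_outer_vertex[OF ef(1) z(1)] contracted_edge_at_outer_vertex[OF ef(2) z(2)]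
      by simp
  qed
qed

lemma edge_class_derived:
  assumes d: "d \<in> contracted_edges K S N" "derived_edge K d"
  shows "edge_class d = {d}"
proof -
  obtain u where u: "u \<in> pends K d" "u \<in> \<Union>S" using contracted_edge_meets_reduced[OF d(1)] .
  have "d = white_at u" using d(2) white_edge_ends[OF _ u(1)] unfolding derived_edge_def by blast
  then show ?thesis using edge_class_eq[OF d(1) u] derived_class_derived[OF u(2)] d(2) by simp
qed

theorem reduction_safe: "safely_reducible K S"
  unfolding safely_reducible_def
proof (intro exI conjI ballI impI)
  show "\<And>h. h \<in> S \<Longrightarrow> hex_pm K h (N h)" by (rule matchings)
  fix d1 d2
  assume d: "d1 \<in> contracted_edges K S N" "d2 \<in> contracted_edges K S N"
    and c: "derived_edge K d1 \<and> derived_edge K d2 \<and> (d1, d2) \<in> (edge_adj K (contracted_edges K S N))\<^sup>*"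
  then have "(d1, d2) \<in> (edge_adj K (contracted_edges K S N))\<^sup>*" by blast
  then have "edge_class d1 = edge_class d2"
    by (induction rule: rtrancl_induct) (auto dest: edge_class_adj)
  then show "d1 = d2" using edge_class_derived[OF d(1)] edge_class_derived[OF d(2)] c by simp
qed

end

section \<open>Star-shaped configurations\<close>

context pseudohex_no_ends
begin

text \<open>If \<open>x \<in> s\<close> has its white mate in \<open>c\<close>, reduce \<open>s\<close> by the matching \<open>b\<close>: a contracted path
through the antipodal class \<open>q\<close> of \<open>s\<close> crosses to the class of \<open>x\<close> and enters \<open>c\<close> at the position
\<open>entry_pos c s x q b\<close>.\<close>

definition entry_pos :: "'v set \<Rightarrow> 'v set \<Rightarrow> 'v \<Rightarrow> nat \<Rightarrow> bool \<Rightarrow> nat" where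
  "entry_pos c s x q b = hex_pos c (wmate (hex_cycle s ! mate_towards b (hex_pos s x) q))"

lemma entry_pos_eq:
  assumes s: "s \<in> hexagons K" and c: "c \<in> hexagons K"
    and x: "x \<in> s" "wmate x \<in> c" "real_edge K (white_at x)"
  shows "entry_pos c s x q b =
    (if mate_towards b (hex_pos s x) q = hex_pos s x then hex_pos c (wmate x)
     else (hex_pos c (wmate x) + 3) mod 6)"
proof -
  have px: "hex_cycle s ! hex_pos s x = x" using hex_pos_spec[OF s x(1)] by auto
  have bx: "hex_cycle s ! ((hex_pos s x + 3) mod 6) = bar K x" using bar_hex_pos[OF s x(1)] by simp
  have xv: "x \<in> pverts K" using hexagon_subset_verts[OF s] x(1) by blast
  have "wmate (bar K x) = bar K (wmate x)" using real_white_at_bar[OF xv x(3)] by blast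
  moreover have "hex_pos c (bar K (wmate x)) = (hex_pos c (wmate x) + 3) mod 6"
    using bar_hex_pos[OF c x(2)] by blast
  ultimately have "hex_pos c (wmate (bar K x)) = (hex_pos c (wmate x) + 3) mod 6" by simp
  then show ?thesis
    using mate_towards_cases[of b "hex_pos s x" q] px bx unfolding entry_pos_def by auto
qed

lemma entry_pos_antipodal:
  assumes s: "s \<in> hexagons K" and c: "c \<in> hexagons K"
    and x: "x \<in> s" "wmate x \<in> c" "real_edge K (white_at x)"
  shows "entry_pos c s x q b = hex_pos c (wmate x) \<or> entry_pos c s x q b = (hex_pos c (wmate x) + 3) mod 6"
  using entry_pos_eq[OF s c x] by simp

lemma entry_pos_True_False:
  assumes s: "s \<in> hexagons K" and c: "c \<in> hexagons K"
    and x: "x \<in> s" "wmate x \<in> c" "real_edge K (white_at x)"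
    and q: "q < 6" "q mod 3 \<noteq> hex_pos s x mod 3"
  shows "entry_pos c s x q True \<noteq> entry_pos c s x q False"
proof -
  have "hex_pos s x < 6" "hex_pos c (wmate x) < 6"
    using hex_pos_spec[OF s x(1)] hex_pos_spec[OF c x(2)] by auto
  then show ?thesis
    using entry_pos_eq[OF s c x] mate_towards_True_False[of "hex_pos s x" q]
      mate_towards_cases[of _ "hex_pos s x" q] q antipode_neq
    by (metis (no_types, lifting))
qed


lemma entry_pos_class:
  assumes s: "s \<in> hexagons K" and c: "c \<in> hexagons K"
    and x: "x \<in> s" "wmate x \<in> c" "real_edge K (white_at x)"
  shows "entry_pos c s x q b < 6" "entry_pos c s x q b mod 3 = hex_pos c (wmate x) mod 3"
proof -
  have "hex_pos c (wmate x) < 6" using hex_pos_spec[OF c x(2)] by blast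
  then show "entry_pos c s x q b < 6" "entry_pos c s x q b mod 3 = hex_pos c (wmate x) mod 3"
    using entry_pos_antipodal[OF s c x, of q b] antipode_mod3 by auto
qed

text \<open>Links from different hexagons reach different antipodal classes of \<open>c\<close>, and even positions of
different classes lie in different edges of the matching \<open>mate True\<close>.\<close>

lemma even_entry_pos_div2_neq:
  assumes c: "c \<in> hexagons K" and s: "s \<in> hexagons K" "s' \<in> hexagons K" "s \<noteq> s'"
    and x: "x \<in> s" "wmate x \<in> c" "real_edge K (white_at x)"
    and x': "x' \<in> s'" "wmate x' \<in> c" "real_edge K (white_at x')"
    and even: "even (entry_pos c s x q b)" "even (entry_pos c s' x' q' b')"
  shows "entry_pos c s x q b div 2 \<noteq> entry_pos c s' x' q' b' div 2"
proof -
  have mate_returns: "wmate y \<in> c \<and> real_edge K (white_at (wmate y)) \<and> wmate (wmate y) \<in> h"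
    if "h \<in> hexagons K" "y \<in> h" "wmate y \<in> c" "real_edge K (white_at y)" for h y
  proof -
    have "y \<in> pverts K" using hexagon_subset_verts that(1,2) by blast
    then show ?thesis using that white_at_wmate wmate_wmate by simp
  qed
  have "hex_pos c (wmate x) mod 3 \<noteq> hex_pos c (wmate x') mod 3"
    using real_exits_mod3_neq[OF c s] mate_returns[OF s(1) x] mate_returns[OF s(2) x'] by blast
  then show ?thesis
    using entry_pos_class[OF s(1) c x] entry_pos_class[OF s(2) c x'] even even_div2_neq by metis
qed

lemma entry_pos_div2_neq:
  assumes s: "s \<in> hexagons K" and c: "c \<in> hexagons K"
    and x: "x \<in> s" "wmate x \<in> c" "real_edge K (white_at x)"
    and q': "q' < 6" "q' mod 3 \<noteq> hex_pos c (wmate x) mod 3"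
    and d: "d \<in> c" "hex_pos c d mod 3 = q' mod 3"
    and avoid: "entry_pos c s x q b \<noteq> mate_towards True (hex_pos c (wmate x)) q'"
  shows "hex_pos c d div 2 \<noteq> entry_pos c s x q b div 2"
proof -
  have "hex_pos c (wmate x) < 6" "hex_pos c d < 6"
    using hex_pos_spec[OF c x(2)] hex_pos_spec[OF c d(1)] by auto
  then show ?thesis
    using div2_eq_mate_towards_True[OF _ q'(1) not_sym[OF q'(2)] entry_pos_class[OF s c x] _ d(2)] avoid
    by metis
qed
end

text \<open>The reduced set \<open>S\<close> consists of a centre \<open>c\<close>, reduced by the matching \<open>mate True\<close>, and leaves
\<open>s\<close>, each joined to \<open>c\<close> by the real pair \<open>white_at (link s)\<close>, \<open>white_at (bar K (link s))\<close> and reduced by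
the matching \<open>side s\<close>.\<close>

locale star_configuration = pseudohex_no_ends K for K :: "('v, 'e) cgraph" +
  fixes S :: "'v set set" and c :: "'v set"
    and link :: "'v set \<Rightarrow> 'v" and third :: "'v set \<Rightarrow> nat" and side :: "'v set \<Rightarrow> bool"
  assumes S_hexagons: "S \<subseteq> hexagons K" and centre: "c \<in> S"
    and link: "\<And>s. s \<in> S \<Longrightarrow> s \<noteq> c \<Longrightarrow>
      link s \<in> s \<and> wmate (link s) \<in> c \<and> real_edge K (white_at (link s))"
    and third: "\<And>s. s \<in> S \<Longrightarrow> s \<noteq> c \<Longrightarrow> third s < 6 \<and> third s mod 3 \<noteq> hex_pos s (link s) mod 3"
    and real_inside: "\<And>e u v. real_edge K e \<Longrightarrow> u \<in> pends K e \<Longrightarrow> v \<in> pends K e \<Longrightarrow>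
      u \<in> \<Union>S \<Longrightarrow> v \<in> \<Union>S \<Longrightarrow> u \<noteq> v \<Longrightarrow>
      \<exists>s\<in>S. s \<noteq> c \<and> (e = white_at (link s) \<or> e = white_at (bar K (link s)))"
    and derived_centre: "\<And>u v. u \<in> c \<Longrightarrow> v \<in> c \<Longrightarrow>
      derived_edge K (white_at u) \<Longrightarrow> derived_edge K (white_at v) \<Longrightarrow> hex_pos c u mod 3 = hex_pos c v mod 3"
    and derived_leaf: "\<And>s v. s \<in> S \<Longrightarrow> s \<noteq> c \<Longrightarrow> v \<in> s \<Longrightarrow>
      derived_edge K (white_at v) \<Longrightarrow> hex_pos s v mod 3 = third s mod 3"
    and entries_distinct: "\<And>s s'. s \<in> S \<Longrightarrow> s' \<in> S \<Longrightarrow> s \<noteq> c \<Longrightarrow> s' \<noteq> c \<Longrightarrow> s \<noteq> s' \<Longrightarrow>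
      entry_pos c s (link s) (third s) (side s) div 2 \<noteq> entry_pos c s' (link s') (third s') (side s') div 2"
    and entry_not_derived: "\<And>s d. s \<in> S \<Longrightarrow> s \<noteq> c \<Longrightarrow> d \<in> c \<Longrightarrow> derived_edge K (white_at d) \<Longrightarrow>
      hex_pos c d div 2 \<noteq> entry_pos c s (link s) (third s) (side s) div 2"
begin

abbreviation entry :: "'v set \<Rightarrow> nat" where
  "entry s \<equiv> entry_pos c s (link s) (third s) (side s)"

lemma leaf_hexagon: "s \<in> S \<Longrightarrow> s \<in> hexagons K"
  using S_hexagons by blast

lemma centre_hexagon: "c \<in> hexagons K"
  using S_hexagons centre by blast

lemma leaf_notin_centre: "s \<in> S \<Longrightarrow> s \<noteq> c \<Longrightarrow> v \<in> s \<Longrightarrow> v \<notin> c"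
  using hexagons_disjoint leaf_hexagon centre_hexagon by metis

lemma link_class:
  assumes s: "s \<in> S" "s \<noteq> c" and w: "w \<in> s" "hex_pos s w mod 3 = hex_pos s (link s) mod 3"
  shows "wmate w \<in> c \<and> real_edge K (white_at w)"
proof -
  have x: "link s \<in> s" "wmate (link s) \<in> c" "real_edge K (white_at (link s))"
    using link[OF s] by auto
  have "w = link s \<or> w = bar K (link s)"
    using hex_pos_mod3_eq_iff[OF leaf_hexagon[OF s(1)] x(1) w(1)] w(2) by simp
  then show ?thesis using joining_bar[OF leaf_hexagon[OF s(1)] centre_hexagon x] x by auto
qed

definition reducing_matching :: "'v set \<Rightarrow> 'e set" where
  "reducing_matching h = alt_matching (if h = c then True else side h) (hex_cycle h)"

text \<open>Label \<open>(c, i)\<close>: the contracted path through the vertex enters \<open>c\<close> in the matching edge at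
positions \<open>2i, 2i + 1\<close>. Label \<open>(s, 0)\<close> with \<open>s \<noteq> c\<close>: the path stays inside the leaf \<open>s\<close>.\<close>

definition label :: "'v \<Rightarrow> 'v set \<times> nat" where
  "label v = (if v \<in> c then (c, hex_pos c v div 2)
     else let s = hex_of v; k = hex_pos s v; p = hex_pos s (link s) in
       if k mod 3 = p mod 3 then (c, hex_pos c (wmate v) div 2)
       else if mate (side s) k mod 3 = p mod 3
         then (c, hex_pos c (wmate (hex_cycle s ! mate (side s) k)) div 2)
       else (s, 0))"

lemma label_centre: "v \<in> c \<Longrightarrow> label v = (c, hex_pos c v div 2)"
  unfolding label_def by simp

lemma label_leaf:
  assumes s: "s \<in> S" "s \<noteq> c" and k: "k < 6"
  shows "label (hex_cycle s ! k) =
    (if k mod 3 = hex_pos s (link s) mod 3 then (c, hex_pos c (wmate (hex_cycle s ! k)) div 2)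
     else if mate (side s) k mod 3 = hex_pos s (link s) mod 3
       then (c, hex_pos c (wmate (hex_cycle s ! mate (side s) k)) div 2)
     else (s, 0))"
proof -
  have v: "hex_cycle s ! k \<in> s" using hex_cycle_nth_in[OF leaf_hexagon[OF s(1)] k] .
  then have "hex_of (hex_cycle s ! k) = s" using hex_of_eq[OF leaf_hexagon[OF s(1)]] by blast
  moreover have "hex_pos s (hex_cycle s ! k) = k" using hex_pos_nth[OF leaf_hexagon[OF s(1)] k] .
  ultimately show ?thesis using leaf_notin_centre[OF s v] unfolding label_def by simp
qed

lemma hex_pm_reducing_matching: "h \<in> S \<Longrightarrow> hex_pm K h (reducing_matching h)"
  using hex_pm_alt_matching hex_cycle_spec[OF leaf_hexagon] unfolding reducing_matching_def by metis

lemma label_matching_edge: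
  assumes h: "h \<in> S" "e \<in> reducing_matching h" and u: "u \<in> pends K e" and v: "v \<in> pends K e"
  shows "label u = label v"
proof (cases "h = c")
  case True
  then obtain k where k: "k < 6" "even k" "pends K e = {hex_cycle c ! k, hex_cycle c ! mate True k}"
    using h alt_matching_edge[OF conjunct1[OF hex_cycle_spec[OF centre_hexagon]], of e True]
    unfolding reducing_matching_def by auto
  have "label (hex_cycle c ! k) = label (hex_cycle c ! mate True k)"
    using label_centre hex_cycle_nth_in[OF centre_hexagon] hex_pos_nth[OF centre_hexagon]
      k mate_less6 mate_True_div2_eq[OF k(1,2)] by simp
  then show ?thesis using u v k(3) by auto
next
  case False
  then obtain k where k: "k < 6" "pends K e = {hex_cycle h ! k, hex_cycle h ! mate (side h) k}"
    using h alt_matching_edge[OF conjunct1[OF hex_cycle_spec[OF leaf_hexagon[OF h(1)]]], of e "side h"]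
    unfolding reducing_matching_def by auto
  have "label (hex_cycle h ! k) = label (hex_cycle h ! mate (side h) k)"
    using label_leaf[OF h(1) False k(1)] label_leaf[OF h(1) False mate_less6]
      mate_mate[OF k(1)] mate_mod3_neq[OF k(1)] by auto
  then show ?thesis using u v k(2) by auto
qed

lemma label_real_edge:
  assumes e: "real_edge K e" and u: "u \<in> pends K e" "u \<in> \<Union>S" and v: "v \<in> pends K e" "v \<in> \<Union>S"
  shows "label u = label v"
proof (cases "u = v")
  case False
  obtain s where s: "s \<in> S" "s \<noteq> c" "e = white_at (link s) \<or> e = white_at (bar K (link s))"
    using real_inside[OF e u(1) v(1) u(2) v(2) False] by blast
  have H: "s \<in> hexagons K" using leaf_hexagon[OF s(1)] .
  have x: "link s \<in> s" using link[OF s(1,2)] by blast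
  obtain w where w: "w \<in> s" "hex_pos s w mod 3 = hex_pos s (link s) mod 3" "e = white_at w"
    using s(3) x bar_hex_pos[OF H x] antipode_mod3 by metis
  have wv: "w \<in> pverts K" using hexagon_subset_verts[OF H] w(1) by blast
  have pw: "hex_pos s w < 6" "hex_cycle s ! hex_pos s w = w" using hex_pos_spec[OF H w(1)] by auto
  have "label w = (c, hex_pos c (wmate w) div 2)"
    using label_leaf[OF s(1,2) pw(1)] pw(2) w(2) by simp
  moreover have "label (wmate w) = (c, hex_pos c (wmate w) div 2)"
    using label_centre link_class[OF s(1,2) w(1,2)] by blast
  moreover have "pends K e = {w, wmate w}" using white_at_ends[OF wv] w(3) by simp
  ultimately show ?thesis using u v by auto
qed simp

lemma label_derived_leaf:
  assumes s: "s \<in> S" "s \<noteq> c" and v: "v \<in> s" "derived_edge K (white_at v)"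
  shows "label v = (c, entry s div 2) \<or> label v = (s, 0)"
proof -
  have H: "s \<in> hexagons K" using leaf_hexagon[OF s(1)] .
  have pv: "hex_pos s v < 6" "hex_cycle s ! hex_pos s v = v" using hex_pos_spec[OF H v(1)] by auto
  have x: "link s \<in> s" using link[OF s] by blast
  have q: "third s < 6" "third s mod 3 \<noteq> hex_pos s (link s) mod 3" using third[OF s] by auto
  have px: "hex_pos s (link s) < 6" using hex_pos_spec[OF H x] by blast
  have cv: "hex_pos s v mod 3 = third s mod 3" using derived_leaf[OF s v] .
  show ?thesis
  proof (cases "mate (side s) (hex_pos s v) mod 3 = hex_pos s (link s) mod 3")
    case True
    have "mate (side s) (hex_pos s v) = mate_towards (side s) (hex_pos s (link s)) (third s)"
      by (rule mate_towards_unique[OF px q(1) not_sym[OF q(2)] mate_less6 True])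
        (use mate_mate[OF pv(1)] cv in simp)
    then show ?thesis
      using label_leaf[OF s pv(1)] pv(2) True cv q(2) unfolding entry_pos_def by simp
  next
    case False
    then show ?thesis using label_leaf[OF s pv(1)] pv(2) cv q(2) by simp
  qed
qed

lemma label_derived_same_leaf:
  assumes s: "s \<in> S" "s \<noteq> c" and u: "u \<in> s" "derived_edge K (white_at u)"
    and v: "v \<in> s" "derived_edge K (white_at v)" and eq: "label u = label v"
  shows "u = v"
proof (rule ccontr)
  assume ne: "u \<noteq> v"
  let ?b = "side s" and ?p = "hex_pos s (link s)"
  have H: "s \<in> hexagons K" using leaf_hexagon[OF s(1)] .
  have x: "link s \<in> s" using link[OF s] by blast
  have q: "third s < 6" "third s mod 3 \<noteq> ?p mod 3" using third[OF s] by auto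
  have px: "?p < 6" using hex_pos_spec[OF H x] by blast
  have cu: "hex_pos s u mod 3 = third s mod 3" using derived_leaf[OF s u] .
  have cv: "hex_pos s v mod 3 = third s mod 3" using derived_leaf[OF s v] .
  have pu: "hex_pos s u < 6" "hex_cycle s ! hex_pos s u = u" using hex_pos_spec[OF H u(1)] by auto
  have pv: "hex_pos s v < 6" "hex_cycle s ! hex_pos s v = v" using hex_pos_spec[OF H v(1)] by auto
  have "v = bar K u" using hex_pos_mod3_eq_iff[OF H u(1) v(1)] cu cv ne by auto
  moreover have "hex_pos s (bar K u) = (hex_pos s u + 3) mod 6"
    using bar_hex_pos[OF H u(1)] by blast
  ultimately have pvu: "hex_pos s v = (hex_pos s u + 3) mod 6" by simp
  have lu: "label u = (if mate ?b (hex_pos s u) mod 3 = ?p mod 3 then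
      (c, hex_pos c (wmate (hex_cycle s ! mate ?b (hex_pos s u))) div 2) else (s, 0))"
    using label_leaf[OF s pu(1)] pu(2) cu q(2) by simp
  have lv: "label v = (if mate ?b (hex_pos s v) mod 3 = ?p mod 3 then
      (c, hex_pos c (wmate (hex_cycle s ! mate ?b (hex_pos s v))) div 2) else (s, 0))"
    using label_leaf[OF s pv(1)] pv(2) cv q(2) by simp
  show False
  proof (cases "mate ?b (hex_pos s u) mod 3 = ?p mod 3")
    case A: True
    show False
    proof (cases "mate ?b (hex_pos s v) mod 3 = ?p mod 3")
      case B: True
      txt \<open>Only one of the antipodal vertices \<open>u, v\<close> is matched towards the class of the link.\<close>
      have "mate ?b (hex_pos s u) = mate_towards ?b ?p (third s)"
        by (rule mate_towards_unique[OF px q(1) not_sym[OF q(2)] mate_less6 A])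
          (use mate_mate[OF pu(1)] cu in simp)
      moreover have "mate ?b (hex_pos s v) = mate_towards ?b ?p (third s)"
        by (rule mate_towards_unique[OF px q(1) not_sym[OF q(2)] mate_less6 B])
          (use mate_mate[OF pv(1)] cv in simp)
      ultimately have "hex_pos s u = hex_pos s v"
        using mate_mate[OF pu(1)] mate_mate[OF pv(1)] by metis
      then show False using ne pu pv by metis
    next
      case B: False
      then show False using lu lv A s(2) eq by simp
    qed
  next
    case A: False
    have "hex_pos s u mod 3 \<noteq> ?p mod 3" using cu q(2) by simp
    then have "mate ?b ((hex_pos s u + 3) mod 6) mod 3 = ?p mod 3"
      using mate_antipode_mod3[OF px pu(1) _ A] by auto
    then show False using lu lv A s(2) eq pvu by simp
  qed
qed

lemma label_derived_inj:
  assumes u: "u \<in> \<Union>S" "derived_edge K (white_at u)" and v: "v \<in> \<Union>S" "derived_edge K (white_at v)"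
    and eq: "label u = label v"
  shows "u = v"
proof -
  have centre_leaf: "False" if "u' \<in> c" "derived_edge K (white_at u')" "s \<in> S" "s \<noteq> c" "v' \<in> s"
    "derived_edge K (white_at v')" "label u' = label v'" for u' v' s
    using label_derived_leaf[OF that(3-6)] label_centre[OF that(1)] entry_not_derived[OF that(3,4,1,2)]
      that(4,7) by auto
  obtain su where su: "su \<in> S" "u \<in> su" using u by blast
  obtain sv where sv: "sv \<in> S" "v \<in> sv" using v by blast
  consider "u \<in> c" "v \<in> c" | "u \<in> c" "v \<notin> c" | "u \<notin> c" "v \<in> c" | "u \<notin> c" "v \<notin> c" "su = sv"
    | "u \<notin> c" "v \<notin> c" "su \<noteq> sv" by blast
  then show ?thesis
  proof cases
    case 1
    txt \<open>Derived vertices of \<open>c\<close> are antipodal, and antipodes lie in different matching edges.\<close>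
    have "hex_pos c u mod 3 = hex_pos c v mod 3" using derived_centre[OF 1 u(2) v(2)] .
    then have "v = u \<or> v = bar K u" using hex_pos_mod3_eq_iff[OF centre_hexagon 1] by simp
    moreover have "hex_pos c u div 2 = hex_pos c v div 2" using eq label_centre 1 by simp
    moreover have "hex_pos c u < 6" using hex_pos_spec[OF centre_hexagon 1(1)] by blast
    ultimately show ?thesis using bar_hex_pos[OF centre_hexagon 1(1)] antipode_div2_neq by metis
  next
    case 2
    then show ?thesis using centre_leaf[OF _ u(2) sv(1) _ sv(2) v(2) eq] sv by blast
  next
    case 3
    then show ?thesis using centre_leaf[OF _ v(2) su(1) _ su(2) u(2) eq[symmetric]] su by blast
  next
    case 4
    then show ?thesis using label_derived_same_leaf[OF su(1) _ su(2) u(2) _ v(2) eq] su sv by blast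
  next
    case 5
    then have "su \<noteq> c" "sv \<noteq> c" using su sv by blast+
    then show ?thesis
      using label_derived_leaf[OF su(1) _ su(2) u(2)] label_derived_leaf[OF sv(1) _ sv(2) v(2)] eq
        entries_distinct[OF su(1) sv(1)] 5(3) by auto
  qed
qed

theorem star_reduction_safe: "safely_reducible K S"
proof -
  interpret safe_labelling K S reducing_matching label
    by unfold_locales
      (use pseudohex no_ends hex_pm_reducing_matching label_matching_edge label_real_edge label_derived_inj
        in blast)+
  show ?thesis by (rule reduction_safe)
qed
end

section \<open>The three fork types\<close>

context pseudohex_no_ends
begin

lemma second_real_exit:
  assumes s: "s \<in> hexagons K"
    and x: "x \<in> s" "wmate x \<in> t1" "real_edge K (white_at x)" and t1: "t1 \<in> hexagons K" "t1 \<noteq> s"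
    and t2: "t2 \<in> hexagons K" "t2 \<noteq> s" "t2 \<noteq> t1" "gadj K s t2"
  obtains z q where "z \<in> s" "real_edge K (white_at z)" "hex_pos s z mod 3 \<noteq> hex_pos s x mod 3"
    "q < 6" "q mod 3 \<noteq> hex_pos s z mod 3" "q mod 3 \<noteq> hex_pos s x mod 3"
    "\<And>u. u \<in> s \<Longrightarrow> wmate u \<notin> s"
proof -
  obtain z where z: "z \<in> s" "real_edge K (white_at z)" "wmate z \<in> t2"
    using gadj_real_edge[OF t2(4)] by blast
  have d: "hex_pos s z mod 3 \<noteq> hex_pos s x mod 3"
    using real_exits_mod3_neq[OF s t2(1) t1(1) t2(3) z x(1,3,2)] .
  obtain q where q: "q < 6" "q mod 3 \<noteq> hex_pos s z mod 3" "q mod 3 \<noteq> hex_pos s x mod 3"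
    using mod3_third_ex[OF d] by blast
  have "wmate x \<notin> s" "wmate z \<notin> s"
    using hexagons_disjoint[OF s t1(1) _ x(2)] hexagons_disjoint[OF s t2(1) _ z(3)] t1(2) t2(2) by blast+
  then have "wmate u \<notin> s" if "u \<in> s" for u
    using no_internal_white_edge[OF s z(1,2) _ x(1,3) _ d that] by blast
  then show ?thesis using that z(1,2) d q by blast
qed

lemma gadj_if_real_edge:
  assumes s: "s \<in> hexagons K" and t: "t \<in> hexagons K" and st: "s \<noteq> t"
    and e: "real_edge K e" "u \<in> pends K e" "v \<in> pends K e" and u: "u \<in> s" and v: "v \<in> t"
  shows "gadj K s t"
  using assms unfolding gadj_def joining_def by blast

lemma real_edge_between:
  assumes no_2cycle: "no_2cycle K"
    and s: "s \<in> hexagons K" and t: "t \<in> hexagons K" and st: "s \<noteq> t"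
    and x: "x \<in> s" "wmate x \<in> t" "real_edge K (white_at x)"
    and e: "real_edge K e" "u \<in> pends K e" "v \<in> pends K e" and u: "u \<in> s" and v: "v \<in> t"
  shows "e = white_at x \<or> e = white_at (bar K x)"
proof -
  have "u \<noteq> v" using hexagons_disjoint[OF s t] u v st by blast
  then have ue: "e = white_at u" "v = wmate u" using real_edge_ends[OF e] by blast+
  then have "u = x \<or> u = bar K x"
    using joining_antipodal[OF no_2cycle s t st x u] v e(1) by simp
  then show ?thesis using ue by auto
qed

lemma real_edge_in_star:
  assumes no_2cycle: "no_2cycle K" and c: "c \<in> hexagons K" and A: "A \<subseteq> hexagons K" "c \<notin> A"
    and leaves_nonadj: "\<And>s s'. s \<in> A \<Longrightarrow> s' \<in> A \<Longrightarrow> s \<noteq> s' \<Longrightarrow> \<not> gadj K s s'"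
    and no_internal: "\<And>h u. h \<in> insert c A \<Longrightarrow> u \<in> h \<Longrightarrow> wmate u \<notin> h"
    and link: "\<And>s. s \<in> A \<Longrightarrow> link s \<in> s \<and> wmate (link s) \<in> c \<and> real_edge K (white_at (link s))"
    and e: "real_edge K e" "u \<in> pends K e" "v \<in> pends K e"
    and u: "u \<in> \<Union>(insert c A)" and v: "v \<in> \<Union>(insert c A)" and uv: "u \<noteq> v"
  shows "\<exists>s\<in>A. e = white_at (link s) \<or> e = white_at (bar K (link s))"
proof -
  obtain h h' where h: "h \<in> insert c A" "u \<in> h" and h': "h' \<in> insert c A" "v \<in> h'"
    using u v by blast
  have hex: "h \<in> hexagons K" "h' \<in> hexagons K" using h(1) h'(1) c A by auto
  have "v = wmate u" using real_edge_ends[OF e uv] by blast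
  then have hh': "h \<noteq> h'" using no_internal[OF h] h' by blast
  then have "h \<notin> A \<or> h' \<notin> A" using leaves_nonadj gadj_if_real_edge[OF hex hh' e h(2) h'(2)] by blast
  then obtain s where s: "s \<in> A" "u \<in> s \<and> v \<in> c \<or> v \<in> s \<and> u \<in> c" using h h' hh' by blast
  have "s \<in> hexagons K" "s \<noteq> c" using s(1) A by auto
  with s show ?thesis
    using real_edge_between[OF no_2cycle _ c _ link[of s, THEN conjunct1] _ _ e(1)] link[OF s(1)] e(2,3) by blast
qed

lemma safely_reducible_dot:
  assumes a: "a \<in> hexagons K" and two: "2 \<le> card (out_nbrs K {a} a)"
  shows "safely_reducible K {a}"
proof -
  obtain t1 t2 where t: "t1 \<in> out_nbrs K {a} a" "t2 \<in> out_nbrs K {a} a" "t1 \<noteq> t2"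
    using two card_le_Suc0_iff_eq[of "out_nbrs K {a} a"] by (cases "finite (out_nbrs K {a} a)") auto
  then have t': "t1 \<in> hexagons K" "t1 \<noteq> a" "t2 \<in> hexagons K" "t2 \<noteq> a" "gadj K a t1" "gadj K a t2"
    unfolding out_nbrs_def by auto
  obtain x1 where x1: "x1 \<in> a" "real_edge K (white_at x1)" "wmate x1 \<in> t1"
    using gadj_real_edge[OF t'(5)] by blast
  obtain x2 q where x2: "x2 \<in> a" "real_edge K (white_at x2)" "hex_pos a x2 mod 3 \<noteq> hex_pos a x1 mod 3"
    and q: "q < 6" "q mod 3 \<noteq> hex_pos a x2 mod 3" "q mod 3 \<noteq> hex_pos a x1 mod 3"
    and no_internal: "\<And>u. u \<in> a \<Longrightarrow> wmate u \<notin> a"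
    using second_real_exit[OF a x1(1,3,2) t'(1,2,3,4) not_sym[OF t(3)] t'(6)] by blast
  txt \<open>The dot is the star without leaves.\<close>
  interpret star_configuration K "{a}" a "\<lambda>_. x1" "\<lambda>_. 0" "\<lambda>_. True"
  proof unfold_locales
    fix e u v assume e: "real_edge K e" and u: "u \<in> pends K e" "u \<in> \<Union>{a}"
      and v: "v \<in> pends K e" "v \<in> \<Union>{a}" and uv: "u \<noteq> v"
    have "v = wmate u" using real_edge_ends[OF e u(1) v(1) uv] by blast
    then show "\<exists>s\<in>{a}. s \<noteq> a \<and> (e = white_at x1 \<or> e = white_at (bar K x1))"
      using no_internal u v by simp
  next
    fix u v assume "u \<in> a" "v \<in> a" "derived_edge K (white_at u)" "derived_edge K (white_at v)"
    then show "hex_pos a u mod 3 = hex_pos a v mod 3"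
      using derived_third_class[OF a x2(1,2) x1(1,2) x2(3) q(2,3)] by metis
  qed (use a pseudohex no_ends in auto)
  show ?thesis by (rule star_reduction_safe)
qed

lemma safely_reducible_subfork:
  assumes no_2cycle: "no_2cycle K"
    and a: "a \<in> hexagons K" and b: "b \<in> hexagons K" and ab: "a \<noteq> b" and gab: "gadj K b a"
    and ta: "ta \<in> hexagons K" "ta \<noteq> a" "ta \<noteq> b" "gadj K a ta"
    and tb: "tb \<in> hexagons K" "tb \<noteq> b" "tb \<noteq> a" "gadj K b tb"
  shows "safely_reducible K {a, b}"
proof -
  obtain x where x: "x \<in> b" "wmate x \<in> a" "real_edge K (white_at x)"
    using gadj_real_edge[OF gab] by blast
  obtain zb qb where zb: "zb \<in> b" "real_edge K (white_at zb)" "hex_pos b zb mod 3 \<noteq> hex_pos b x mod 3"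
    and qb: "qb < 6" "qb mod 3 \<noteq> hex_pos b zb mod 3" "qb mod 3 \<noteq> hex_pos b x mod 3"
    and no_internal_b: "\<And>u. u \<in> b \<Longrightarrow> wmate u \<notin> b"
    using second_real_exit[OF b x a ab tb] by blast
  define y where "y = wmate x"
  have xv: "x \<in> pverts K" using hexagon_subset_verts[OF b] x(1) by blast
  have y: "y \<in> a" "wmate y \<in> b" "real_edge K (white_at y)"
    using x white_at_wmate[OF xv] wmate_wmate[OF xv] unfolding y_def by auto
  obtain za qa where za: "za \<in> a" "real_edge K (white_at za)" "hex_pos a za mod 3 \<noteq> hex_pos a y mod 3"
    and qa: "qa < 6" "qa mod 3 \<noteq> hex_pos a za mod 3" "qa mod 3 \<noteq> hex_pos a y mod 3"
    and no_internal_a: "\<And>u. u \<in> a \<Longrightarrow> wmate u \<notin> a"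
    using second_real_exit[OF a y b not_sym[OF ab] ta] by blast
  txt \<open>The entry of \<open>b\<close> into \<open>a\<close> can be moved to the antipode, so that it avoids the matching
    edge of \<open>a\<close> holding the derived edges.\<close>
  obtain m where m: "entry_pos a b x qb m \<noteq> mate_towards True (hex_pos a y) qa"
    using entry_pos_True_False[OF b a x qb(1,3)] by metis
  interpret star_configuration K "{a, b}" a "\<lambda>_. x" "\<lambda>_. qb" "\<lambda>_. m"
  proof unfold_locales
    fix e u v assume e: "real_edge K e" "u \<in> pends K e" "v \<in> pends K e"
      and uv: "u \<in> \<Union>{a, b}" "v \<in> \<Union>{a, b}" "u \<noteq> v"
    have "\<exists>s\<in>{b}. e = white_at x \<or> e = white_at (bar K x)"
    proof (rule real_edge_in_star[where link = "\<lambda>_. x", OF no_2cycle a _ _ _ _ _ e])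
      show "{b} \<subseteq> hexagons K" "a \<notin> {b}" using b ab by auto
      show "wmate w \<notin> h" if "h \<in> insert a {b}" "w \<in> h" for h w
        using that no_internal_a no_internal_b by auto
    qed (use x uv in auto)
    then show "\<exists>s\<in>{a, b}. s \<noteq> a \<and> (e = white_at x \<or> e = white_at (bar K x))"
      using ab by auto
  next
    fix u v assume "u \<in> a" "v \<in> a" "derived_edge K (white_at u)" "derived_edge K (white_at v)"
    then show "hex_pos a u mod 3 = hex_pos a v mod 3"
      using derived_third_class[OF a za(1,2) y(1,3) za(3) qa(2,3)] by metis
  next
    fix s v assume "s \<in> {a, b}" "s \<noteq> a" "v \<in> s" "derived_edge K (white_at v)"
    then show "hex_pos s v mod 3 = qb mod 3"
      using derived_third_class[OF b zb(1,2) x(1,3) zb(3) qb(2,3)] by auto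
  next
    fix s d assume "s \<in> {a, b}" "s \<noteq> a" "d \<in> a" "derived_edge K (white_at d)"
    then show "hex_pos a d div 2 \<noteq> entry_pos a s x qb m div 2"
      using entry_pos_div2_neq[OF b a x qa(1,3)[unfolded y_def] _ _ m[unfolded y_def]]
        derived_third_class[OF a za(1,2) y(1,3) za(3) qa(2,3)] by auto
  qed (use a b x qb pseudohex no_ends in auto)
  show ?thesis by (rule star_reduction_safe)
qed

lemma star_leaf:
  assumes c: "c \<in> hexagons K" and s: "s \<in> hexagons K" "s \<noteq> c" "gadj K s c"
    and t: "t \<in> hexagons K" "t \<noteq> s" "t \<noteq> c" "gadj K s t"
  obtains x q b where "x \<in> s" "wmate x \<in> c" "real_edge K (white_at x)"
    "q < 6" "q mod 3 \<noteq> hex_pos s x mod 3"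
    "\<And>v. v \<in> s \<Longrightarrow> derived_edge K (white_at v) \<Longrightarrow> hex_pos s v mod 3 = q mod 3"
    "even (entry_pos c s x q b)" "\<And>u. u \<in> s \<Longrightarrow> wmate u \<notin> s"
proof -
  obtain x where x: "x \<in> s" "wmate x \<in> c" "real_edge K (white_at x)"
    using gadj_real_edge[OF s(3)] by blast
  obtain z q where z: "z \<in> s" "real_edge K (white_at z)" "hex_pos s z mod 3 \<noteq> hex_pos s x mod 3"
    and q: "q < 6" "q mod 3 \<noteq> hex_pos s z mod 3" "q mod 3 \<noteq> hex_pos s x mod 3"
    and no_internal: "\<And>u. u \<in> s \<Longrightarrow> wmate u \<notin> s"
    using second_real_exit[OF s(1) x c not_sym[OF s(2)] t] by blast
  have "hex_pos c (wmate x) < 6" using hex_pos_spec[OF c x(2)] by blast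
  then obtain b where "even (entry_pos c s x q b)"
    using entry_pos_True_False[OF s(1) c x q(1,3)] entry_pos_antipodal[OF s(1) c x] antipode_even_neq
    by metis
  then show ?thesis
    using that[OF x q(1,3) derived_third_class[OF s(1) z(1,2) x(1,3) z(3) q(2,3)]] no_internal by blast
qed

lemma safely_reducible_star:
  assumes no_2cycle: "no_2cycle K" and c: "c \<in> hexagons K" and A: "A \<subseteq> hexagons K" "c \<notin> A"
    and adj_centre: "\<And>s. s \<in> A \<Longrightarrow> gadj K s c"
    and adj_outside: "\<And>s. s \<in> A \<Longrightarrow> \<exists>t\<in>hexagons K. t \<notin> A \<and> t \<noteq> c \<and> gadj K s t"
    and leaves_nonadj: "\<And>s s'. s \<in> A \<Longrightarrow> s' \<in> A \<Longrightarrow> s \<noteq> s' \<Longrightarrow> \<not> gadj K s s'"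
    and centre_real: "\<And>u. u \<in> c \<Longrightarrow> real_edge K (white_at u) \<and> wmate u \<notin> c"
  shows "safely_reducible K (insert c A)"
proof -
  have leaf: "s \<in> hexagons K" "s \<noteq> c" if "s \<in> A" for s using A that by blast+
  have "\<exists>x q b. x \<in> s \<and> wmate x \<in> c \<and> real_edge K (white_at x) \<and> q < 6 \<and> q mod 3 \<noteq> hex_pos s x mod 3 \<and>
      (\<forall>v\<in>s. derived_edge K (white_at v) \<longrightarrow> hex_pos s v mod 3 = q mod 3) \<and>
      even (entry_pos c s x q b) \<and> (\<forall>u\<in>s. wmate u \<notin> s)" if s: "s \<in> A" for s
  proof -
    obtain t where t: "t \<in> hexagons K" "t \<notin> A" "t \<noteq> c" "gadj K s t" using adj_outside[OF s] by blast
    have "t \<noteq> s" using t(2) s by blast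
    obtain x q b where "x \<in> s" "wmate x \<in> c" "real_edge K (white_at x)" "q < 6"
      "q mod 3 \<noteq> hex_pos s x mod 3"
      "\<And>v. v \<in> s \<Longrightarrow> derived_edge K (white_at v) \<Longrightarrow> hex_pos s v mod 3 = q mod 3"
      "even (entry_pos c s x q b)" "\<And>u. u \<in> s \<Longrightarrow> wmate u \<notin> s"
      using star_leaf[OF c leaf[OF s] adj_centre[OF s] t(1) \<open>t \<noteq> s\<close> t(3,4)] by blast
    then show ?thesis by blast
  qed
  then obtain link third side where leaf_data: "\<And>s. s \<in> A \<Longrightarrow>
      link s \<in> s \<and> wmate (link s) \<in> c \<and> real_edge K (white_at (link s)) \<and>
      third s < 6 \<and> third s mod 3 \<noteq> hex_pos s (link s) mod 3 \<and>
      (\<forall>v\<in>s. derived_edge K (white_at v) \<longrightarrow> hex_pos s v mod 3 = third s mod 3) \<and>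
      even (entry_pos c s (link s) (third s) (side s)) \<and> (\<forall>u\<in>s. wmate u \<notin> s)"
    by metis
  have link: "link s \<in> s \<and> wmate (link s) \<in> c \<and> real_edge K (white_at (link s))" if "s \<in> A" for s
    using leaf_data[OF that] by blast
  have entries_distinct: "entry_pos c s (link s) (third s) (side s) div 2 \<noteq>
      entry_pos c s' (link s') (third s') (side s') div 2" if s: "s \<in> A" "s' \<in> A" "s \<noteq> s'" for s s'
    using even_entry_pos_div2_neq[OF c leaf(1)[OF s(1)] leaf(1)[OF s(2)] s(3)] link[OF s(1)] link[OF s(2)]
      leaf_data[OF s(1)] leaf_data[OF s(2)] by blast
  interpret star_configuration K "insert c A" c link third side
  proof unfold_locales
    fix e u v assume "real_edge K e" "u \<in> pends K e" "v \<in> pends K e"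
      "u \<in> \<Union>(insert c A)" "v \<in> \<Union>(insert c A)" "u \<noteq> v"
    then have "\<exists>s\<in>A. e = white_at (link s) \<or> e = white_at (bar K (link s))"
      using real_edge_in_star[OF no_2cycle c A leaves_nonadj _ link] centre_real leaf_data by blast
    then show "\<exists>s\<in>insert c A. s \<noteq> c \<and> (e = white_at (link s) \<or> e = white_at (bar K (link s)))"
      using leaf(2) by blast
  next
    fix u v assume "u \<in> c" "derived_edge K (white_at u)"
    then show "hex_pos c u mod 3 = hex_pos c v mod 3"
      using centre_real unfolding derived_edge_def by blast
  next
    fix d s assume "d \<in> c" "derived_edge K (white_at d)"
    then show "hex_pos c d div 2 \<noteq> entry_pos c s (link s) (third s) (side s) div 2"
      using centre_real unfolding derived_edge_def by blast
  qed (use c A link leaf_data entries_distinct pseudohex no_ends in auto)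
  show ?thesis by (rule star_reduction_safe)
qed

end

context pseudohex_no_ends
begin

lemma three_neighbours_real:
  assumes c: "c \<in> hexagons K" and a: "a1 \<in> hexagons K" "a2 \<in> hexagons K" "a3 \<in> hexagons K"
    and dist: "distinct [c, a1, a2, a3]" and adj: "gadj K c a1" "gadj K c a2" "gadj K c a3"
    and u: "u \<in> c"
  shows "real_edge K (white_at u) \<and> wmate u \<notin> c"
proof -
  obtain y1 where y1: "y1 \<in> c" "real_edge K (white_at y1)" "wmate y1 \<in> a1"
    using gadj_real_edge[OF adj(1)] by blast
  obtain y2 where y2: "y2 \<in> c" "real_edge K (white_at y2)" "wmate y2 \<in> a2"
    using gadj_real_edge[OF adj(2)] by blast
  obtain y3 where y3: "y3 \<in> c" "real_edge K (white_at y3)" "wmate y3 \<in> a3"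
    using gadj_real_edge[OF adj(3)] by blast
  have ne: "a1 \<noteq> a2" "a1 \<noteq> a3" "a2 \<noteq> a3" using dist by auto
  have "hex_pos c y1 mod 3 \<noteq> hex_pos c y2 mod 3" "hex_pos c y1 mod 3 \<noteq> hex_pos c y3 mod 3"
    "hex_pos c y2 mod 3 \<noteq> hex_pos c y3 mod 3"
    using real_exits_mod3_neq[OF c a(1) a(2) ne(1) y1 y2] real_exits_mod3_neq[OF c a(1) a(3) ne(2) y1 y3]
      real_exits_mod3_neq[OF c a(2) a(3) ne(3) y2 y3] by auto
  then have "hex_pos c u mod 3 = hex_pos c y1 mod 3 \<or> hex_pos c u mod 3 = hex_pos c y2 mod 3
      \<or> hex_pos c u mod 3 = hex_pos c y3 mod 3"
    by (rule mod3_cover)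
  moreover have "wmate y1 \<notin> c" "wmate y2 \<notin> c" "wmate y3 \<notin> c"
    using hexagons_disjoint[OF c a(1)] hexagons_disjoint[OF c a(2)] hexagons_disjoint[OF c a(3)]
      dist y1(3) y2(3) y3(3) by auto
  ultimately show ?thesis
    using real_white_at_antipodal[OF c _ _ u] wmate_notin_antipodal[OF c _ _ _ u] y1 y2 y3 by blast
qed

lemma safely_reducible_star_fork:
  assumes no_2cycle: "no_2cycle K" and S: "S \<subseteq> hexagons K"
    and shape: "S = {c, a1, a2, a3}" "distinct [c, a1, a2, a3]"
    and adj: "\<forall>u\<in>S. \<forall>v\<in>S. gadj K u v \<longleftrightarrow> (u = c \<and> v \<in> {a1, a2, a3}) \<or> (v = c \<and> u \<in> {a1, a2, a3})"
    and out: "card (out_nbrs K S a1) = 1" "card (out_nbrs K S a2) = 1" "card (out_nbrs K S a3) = 1"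
  shows "safely_reducible K S"
proof -
  define A where "A = {a1, a2, a3}"
  have SA: "S = insert c A" unfolding A_def using shape by simp
  have hex: "c \<in> hexagons K" "a1 \<in> hexagons K" "a2 \<in> hexagons K" "a3 \<in> hexagons K"
    using S shape by auto
  have A: "A \<subseteq> hexagons K" "c \<notin> A" using S shape unfolding A_def by auto
  have adj_outside: "\<exists>t\<in>hexagons K. t \<notin> A \<and> t \<noteq> c \<and> gadj K s t" if s: "s \<in> A" for s
  proof -
    have "card (out_nbrs K S s) = 1" using s out unfolding A_def by auto
    then obtain t where "out_nbrs K S s = {t}" by (rule card_1_singletonE)
    then have "t \<in> hexagons K - S" "gadj K s t" unfolding out_nbrs_def by auto
    then show ?thesis using SA by blast
  qed
  have adj_iff: "gadj K u v \<longleftrightarrow> (u = c \<and> v \<in> A) \<or> (v = c \<and> u \<in> A)" if "u \<in> S" "v \<in> S" for u v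
    unfolding A_def using adj that by simp
  have "gadj K c a1" "gadj K c a2" "gadj K c a3"
    using adj_iff[of c] SA unfolding A_def by auto
  then have centre: "real_edge K (white_at u) \<and> wmate u \<notin> c" if "u \<in> c" for u
    using three_neighbours_real[OF hex shape(2)] that by blast
  show ?thesis unfolding SA
  proof (rule safely_reducible_star[OF no_2cycle hex(1) A _ adj_outside])
    show "gadj K s c" if "s \<in> A" for s using adj_iff[of s c] that SA by blast
    show "\<not> gadj K s s'" if "s \<in> A" "s' \<in> A" "s \<noteq> s'" for s s'
      using adj_iff[of s s'] that SA A(2) by blast
  qed (use centre in auto)
qed

lemma bold_shape_safely_reducible:
  assumes no_2cycle: "no_2cycle K" and S: "S \<subseteq> hexagons K" and shape: "bold_shape L K S"
  shows "safely_reducible K S"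
proof (cases L)
  case StarFork
  then obtain c a1 a2 a3 where "S = {c, a1, a2, a3}" "distinct [c, a1, a2, a3]"
    "\<forall>u\<in>S. \<forall>v\<in>S. gadj K u v \<longleftrightarrow> (u = c \<and> v \<in> {a1, a2, a3}) \<or> (v = c \<and> u \<in> {a1, a2, a3})"
    "card (out_nbrs K S a1) = 1" "card (out_nbrs K S a2) = 1" "card (out_nbrs K S a3) = 1"
    using shape[unfolded bold_shape_def StarFork forktype.case] by (elim exE conjE) (rule that, assumption+)
  then show ?thesis by (rule safely_reducible_star_fork[OF no_2cycle S])
next
  case Subfork
  then obtain a b where ab: "S = {a, b}" "a \<noteq> b" "gadj K a b"
    "card (out_nbrs K S a) = 1" "card (out_nbrs K S b) = 1"
    using shape unfolding bold_shape_def by auto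
  obtain ta where ta: "out_nbrs K S a = {ta}" using ab(4) by (rule card_1_singletonE)
  obtain tb where tb: "out_nbrs K S b = {tb}" using ab(5) by (rule card_1_singletonE)
  have t: "ta \<in> hexagons K" "ta \<noteq> a" "ta \<noteq> b" "gadj K a ta"
    "tb \<in> hexagons K" "tb \<noteq> b" "tb \<noteq> a" "gadj K b tb"
    using ta tb ab(1) unfolding out_nbrs_def by auto
  have hex: "a \<in> hexagons K" "b \<in> hexagons K" using S ab(1) by auto
  show ?thesis
    unfolding ab(1) by (rule safely_reducible_subfork[OF no_2cycle hex ab(2) gadj_sym[OF ab(3)] t])
next
  case Dot
  then obtain a where "S = {a}" "card (out_nbrs K S a) \<in> {2, 3}"
    using shape unfolding bold_shape_def by auto
  then show ?thesis using safely_reducible_dot[of a] S by auto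
qed

end

theorem mainTheorem7:
  fixes L :: forktype
    and K :: "('v, 'e) cgraph"
    and K' :: "('w, 'f) cgraph"
    and S :: "'v set set"
  assumes "L \<in> {StarFork, Subfork, Dot}"
    and "proper K" and "proper K'"
    and "L_addition L K' K S"
  shows "safely_reducible K S"
proof -
  interpret pseudohex_no_ends K
    using \<open>proper K\<close> by unfold_locales (simp_all add: proper_def)
  have "no_2cycle K" using \<open>proper K\<close> unfolding proper_def by blast
  moreover have "S \<subseteq> hexagons K" "bold_shape L K S"
    using \<open>L_addition L K' K S\<close> unfolding L_addition_def by auto
  ultimately show ?thesis by (rule bold_shape_safely_reducible)
qed

end
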